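(* Consider the system, for $n\ge2$ and $j=1,\dots,n-1$, \[ y_{j,x}=2y_j(z_j+v)-\alpha_j,\quad z_{j,x}=-z_j(z_j+2v)-\mu_j,\qquad v=\frac2x(y_1z_1+\dots+y_{n-1}z_{n-1}+\beta), \] with constants $\alpha_1,\dots,\alpha_{n-1},\beta$ and pairwise distinct nonzero constants $\mu_1,\dots,\mu_{n-1}$. Put $y_n:=-\frac x2-y_1-\dots-y_{n-1}$ and $\alpha_n:=\frac12-2\beta-\alpha_1-\dots-\alpha_{n-1}$. Define the following transformations (the $\mu_j$ are never changed; unspecified quantities are unchanged). For $k=1,\dots,n-1$: $A_k$: $\tilde y_j=y_j$ for all $j$, $\tilde z_j=z_j$ ($j\neq k$), $\tilde z_k=z_k-\frac{\alpha_k}{y_k}$, $\tilde\alpha_k=-\alpha_k$, $\tilde\beta=\beta+\alpha_k$. $B_k$: $\tilde z_j=\frac{\mu_k}{z_k}-\frac{\mu_j-\mu_k}{z_j-z_k}$ ($j\ne k$), $\tilde z_k=\frac{\mu_k}{z_k}$; $\tilde y_j=\frac{z_j-z_k}{\mu_j-\mu_k}\bigl((z_j-z_k)y_j-\alpha_j\bigr)$ ($j\ne k$); $\tilde y_k=-\frac x2-\sum_{j\le n-1,\,j\neq k}\tilde y_j+\frac{z_k}{\mu_k}(z_ky_n+\alpha_n)$; $\tilde\alpha_j=\alpha_j$ ($j\neq k$), $\tilde\alpha_k=1-\alpha_k$, $\tilde\beta=\beta+\alpha_k-\frac12$. $A_n$: $\tilde y_j=y_j$, $\tilde z_j=z_j+\frac{\tilde\beta-\beta}{y_n}$,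 $\tilde\alpha_j=\alpha_j$, $\tilde\beta=\beta+\alpha_n$. $B_n$: $\tilde z_j=-\frac{\mu_j}{z_j}$, $\tilde y_j=\frac{z_j}{\mu_j}(z_jy_j-\alpha_j)$, $\tilde\alpha_j=\alpha_j$, $\tilde\beta=\beta+\alpha_n-\frac12$. Then each of $A_1,B_1,\dots,A_n,B_n$ maps solutions of the system with parameters $(\alpha_1,\dots,\alpha_{n-1},\beta)$ to solutions of the system with parameters $(\tilde\alpha_1,\dots,\tilde\alpha_{n-1},\tilde\beta)$, and they satisfy, for $j\neq k$ in $\{1,\dots,n\}$: $A_k^2=\mathrm{id}$, $A_jA_k=A_kA_j$, $B_k^2=\mathrm{id}$, $B_jB_k=B_kB_j$, $A_jB_k=B_kA_j$.
   Context: Formulas are considered where all denominators are nonzero; subscript $x$ denotes differentiation in $x$. *)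

theory Defs
  imports "HOL-Analysis.Analysis"
begin

text \<open>A state at a fixed point x: (y_1..y_{n-1}, z_1..z_{n-1}, alpha_1..alpha_{n-1}, beta),
  stored as functions on nat; only indices 1..n-1 are meaningful, all others are left unchanged
  by the transformations.\<close>
type_synonym state = "(nat \<Rightarrow> complex) \<times> (nat \<Rightarrow> complex) \<times> (nat \<Rightarrow> complex) \<times> complex"

definition yN :: "nat \<Rightarrow> complex \<Rightarrow> (nat \<Rightarrow> complex) \<Rightarrow> complex" where
  "yN n x Y = - x / 2 - (\<Sum>j=1..n-1. Y j)"

definition alphaN :: "nat \<Rightarrow> (nat \<Rightarrow> complex) \<Rightarrow> complex \<Rightarrow> complex" where
  "alphaN n a b = 1/2 - 2 * b - (\<Sum>j=1..n-1. a j)"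

definition vv :: "nat \<Rightarrow> complex \<Rightarrow> (nat \<Rightarrow> complex \<Rightarrow> complex) \<Rightarrow> (nat \<Rightarrow> complex \<Rightarrow> complex) \<Rightarrow> complex \<Rightarrow> complex" where
  "vv n b y z x = 2 / x * ((\<Sum>j=1..n-1. y j x * z j x) + b)"

definition sys_solution :: "nat \<Rightarrow> (nat \<Rightarrow> complex) \<Rightarrow> (nat \<Rightarrow> complex) \<Rightarrow> complex \<Rightarrow> complex set
    \<Rightarrow> (nat \<Rightarrow> complex \<Rightarrow> complex) \<Rightarrow> (nat \<Rightarrow> complex \<Rightarrow> complex) \<Rightarrow> bool" where
  "sys_solution n mu a b S y z \<longleftrightarrow> (\<forall>x\<in>S. \<forall>j\<in>{1..n-1}.
     (y j has_field_derivative (2 * y j x * (z j x + vv n b y z x) - a j)) (at x) \<and>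
     (z j has_field_derivative (- z j x * (z j x + 2 * vv n b y z x) - mu j)) (at x))"

text \<open>Transformations A_k (k = 1..n) as partial maps: None where some denominator vanishes.\<close>
definition trA :: "nat \<Rightarrow> (nat \<Rightarrow> complex) \<Rightarrow> nat \<Rightarrow> complex \<Rightarrow> state \<Rightarrow> state option" where
  "trA n mu k x s = (case s of (Y, Z, a, b) \<Rightarrow>
     if k = n then
       (if yN n x Y \<noteq> 0 then
          Some (Y, (\<lambda>j. if j \<in> {1..n-1} then Z j + ((b + alphaN n a b) - b) / yN n x Y else Z j),
                a, b + alphaN n a b)
        else None)
     else
       (if Y k \<noteq> 0 then
          Some (Y, Z(k := Z k - a k / Y k), a(k := - a k), b + a k)
        else None))"

definition trB :: "nat \<Rightarrow> (nat \<Rightarrow> complex) \<Rightarrow> nat \<Rightarrow> complex \<Rightarrow> state \<Rightarrow> state option" where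
  "trB n mu k x s = (case s of (Y, Z, a, b) \<Rightarrow>
     if k = n then
       (if (\<forall>j\<in>{1..n-1}. Z j \<noteq> 0 \<and> mu j \<noteq> 0) then
          Some ((\<lambda>j. if j \<in> {1..n-1} then Z j / mu j * (Z j * Y j - a j) else Y j),
                (\<lambda>j. if j \<in> {1..n-1} then - mu j / Z j else Z j),
                a, b + alphaN n a b - 1/2)
        else None)
     else
       (if Z k \<noteq> 0 \<and> mu k \<noteq> 0 \<and> (\<forall>j\<in>{1..n-1} - {k}. Z j \<noteq> Z k \<and> mu j \<noteq> mu k) then
          (let Yo = (\<lambda>j. (Z j - Z k) / (mu j - mu k) * ((Z j - Z k) * Y j - a j)) in
          Some ((\<lambda>j. if j \<in> {1..n-1} - {k} then Yo j
                     else if j = k then - x / 2 - (\<Sum>i\<in>{1..n-1} - {k}. Yo i)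
                                      + Z k / mu k * (Z k * yN n x Y + alphaN n a b)
                     else Y j),
                (\<lambda>j. if j \<in> {1..n-1} - {k} then mu k / Z k - (mu j - mu k) / (Z j - Z k)
                     else if j = k then mu k / Z k
                     else Z j),
                a(k := 1 - a k), b + a k - 1/2))
        else None))"

definition bt_map :: "bool \<Rightarrow> nat \<Rightarrow> (nat \<Rightarrow> complex) \<Rightarrow> nat \<Rightarrow> complex \<Rightarrow> state \<Rightarrow> state option" where
  "bt_map c n mu k x s = (if c then trB n mu k x s else trA n mu k x s)"

end

theory Submission
  imports Defs
begin

text \<open>
  Every claim reduces to rational identities in the coordinates once two facts are isolated.
  First, the component y_k of B_k is chosen exactly so that y_n = -x/2 - (y_1 + ... + y_{n-1})
  transforms as y_n \<mapsto> -(z_k/\<mu>_k)(z_k y_n + \<alpha>_n), while \<alpha>_n is invariant under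
  A_k and B_k; this handles the k-th components in all involution and commutation identities.
  Second, the potential v transforms as v \<mapsto> v under A_k, v \<mapsto> v - \<alpha>_n/y_n under A_n,
  v \<mapsto> -v under B_n and v \<mapsto> -(\<mu>_k/z_k + z_k) - v under B_k; with this, each transformed
  equation follows from the chain rule.
\<close>

definition partial_involution :: "('s \<Rightarrow> 's option) \<Rightarrow> bool" where
  "partial_involution f \<longleftrightarrow> (\<forall>s s1 s2. f s = Some s1 \<longrightarrow> f s1 = Some s2 \<longrightarrow> s2 = s)"

definition partial_commute :: "('s \<Rightarrow> 's option) \<Rightarrow> ('s \<Rightarrow> 's option) \<Rightarrow> bool" where
  "partial_commute f g \<longleftrightarrow>
     (\<forall>s s1 s2. Option.bind (f s) g = Some s1 \<longrightarrow> Option.bind (g s) f = Some s2 \<longrightarrow> s1 = s2)"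

lemma partial_involution_quadI:
  assumes "\<And>Y Z a b s1 s2. f (Y, Z, a, b) = Some s1 \<Longrightarrow> f s1 = Some s2 \<Longrightarrow> s2 = (Y, Z, a, b)"
  shows "partial_involution f"
  unfolding partial_involution_def using assms by (metis prod_cases4)

lemma partial_commute_quadI:
  assumes "\<And>Y Z a b t1 s1 t2 s2. f (Y, Z, a, b) = Some t1 \<Longrightarrow> g t1 = Some s1 \<Longrightarrow>
             g (Y, Z, a, b) = Some t2 \<Longrightarrow> f t2 = Some s2 \<Longrightarrow> s1 = s2"
  shows "partial_commute f g"
  unfolding partial_commute_def bind_eq_Some_conv using assms by (metis prod_cases4)

lemma partial_commute_sym: "partial_commute f g \<Longrightarrow> partial_commute g f"
  unfolding partial_commute_def by metis

lemma sum_remove_index: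
  fixes f :: "nat \<Rightarrow> 'a::ab_group_add"
  shows "k \<in> {1..n-1} \<Longrightarrow> sum f {1..n-1} = f k + sum f ({1..n-1} - {k})"
  by (simp add: sum.remove)

lemma sum_fun_upd:
  fixes f :: "'a \<Rightarrow> 'b::ab_group_add"
  shows "finite A \<Longrightarrow> k \<in> A \<Longrightarrow> sum (f(k := v)) A = sum f A - f k + v"
  by (simp add: sum.remove)

lemma sum_diff_insert:
  fixes f :: "'a \<Rightarrow> 'b::comm_monoid_add"
  assumes "finite A" "j \<in> A" "j \<noteq> k"
  shows "sum f (A - {k}) = f j + sum f (A - {j, k})"
proof -
  have "A - {j, k} = A - {k} - {j}"
    by auto
  then show ?thesis
    using assms by (simp add: sum.remove)
qed

definition Bk_defined :: "nat \<Rightarrow> (nat \<Rightarrow> complex) \<Rightarrow> nat \<Rightarrow> (nat \<Rightarrow> complex) \<Rightarrow> bool" where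
  "Bk_defined n mu k Z \<longleftrightarrow> Z k \<noteq> 0 \<and> mu k \<noteq> 0 \<and> (\<forall>j\<in>{1..n-1} - {k}. Z j \<noteq> Z k \<and> mu j \<noteq> mu k)"

definition Bn_defined :: "nat \<Rightarrow> (nat \<Rightarrow> complex) \<Rightarrow> (nat \<Rightarrow> complex) \<Rightarrow> bool" where
  "Bn_defined n mu Z \<longleftrightarrow> (\<forall>j\<in>{1..n-1}. Z j \<noteq> 0 \<and> mu j \<noteq> 0)"

definition Bk_y_off :: "(nat \<Rightarrow> complex) \<Rightarrow> nat \<Rightarrow> (nat \<Rightarrow> complex) \<Rightarrow> (nat \<Rightarrow> complex)
    \<Rightarrow> (nat \<Rightarrow> complex) \<Rightarrow> nat \<Rightarrow> complex" where
  "Bk_y_off mu k Y Z a j = (Z j - Z k) / (mu j - mu k) * ((Z j - Z k) * Y j - a j)"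

definition Bk_y :: "nat \<Rightarrow> (nat \<Rightarrow> complex) \<Rightarrow> nat \<Rightarrow> complex \<Rightarrow> (nat \<Rightarrow> complex) \<Rightarrow> (nat \<Rightarrow> complex)
    \<Rightarrow> (nat \<Rightarrow> complex) \<Rightarrow> complex \<Rightarrow> nat \<Rightarrow> complex" where
  "Bk_y n mu k x Y Z a b = (\<lambda>j. if j \<in> {1..n-1} - {k} then Bk_y_off mu k Y Z a j
     else if j = k then - x / 2 - (\<Sum>i\<in>{1..n-1} - {k}. Bk_y_off mu k Y Z a i)
                        + Z k / mu k * (Z k * yN n x Y + alphaN n a b)
     else Y j)"

definition Bk_z :: "nat \<Rightarrow> (nat \<Rightarrow> complex) \<Rightarrow> nat \<Rightarrow> (nat \<Rightarrow> complex) \<Rightarrow> nat \<Rightarrow> complex" where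
  "Bk_z n mu k Z = (\<lambda>j. if j \<in> {1..n-1} - {k} then mu k / Z k - (mu j - mu k) / (Z j - Z k)
     else if j = k then mu k / Z k
     else Z j)"

definition Bn_y :: "nat \<Rightarrow> (nat \<Rightarrow> complex) \<Rightarrow> (nat \<Rightarrow> complex) \<Rightarrow> (nat \<Rightarrow> complex)
    \<Rightarrow> (nat \<Rightarrow> complex) \<Rightarrow> nat \<Rightarrow> complex" where
  "Bn_y n mu Y Z a = (\<lambda>j. if j \<in> {1..n-1} then Z j / mu j * (Z j * Y j - a j) else Y j)"

definition Bn_z :: "nat \<Rightarrow> (nat \<Rightarrow> complex) \<Rightarrow> (nat \<Rightarrow> complex) \<Rightarrow> nat \<Rightarrow> complex" where
  "Bn_z n mu Z = (\<lambda>j. if j \<in> {1..n-1} then - mu j / Z j else Z j)"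

definition An_z :: "nat \<Rightarrow> complex \<Rightarrow> (nat \<Rightarrow> complex) \<Rightarrow> (nat \<Rightarrow> complex) \<Rightarrow> (nat \<Rightarrow> complex)
    \<Rightarrow> complex \<Rightarrow> nat \<Rightarrow> complex" where
  "An_z n x Y Z a b = (\<lambda>j. if j \<in> {1..n-1} then Z j + alphaN n a b / yN n x Y else Z j)"

lemma trA_eq_Some_iff:
  "k \<noteq> n \<Longrightarrow> trA n mu k x (Y, Z, a, b) = Some s \<longleftrightarrow>
     Y k \<noteq> 0 \<and> s = (Y, Z(k := Z k - a k / Y k), a(k := - a k), b + a k)"
  by (auto simp: trA_def)

lemma trA_n_eq_Some_iff:
  "trA n mu n x (Y, Z, a, b) = Some s \<longleftrightarrow>
     yN n x Y \<noteq> 0 \<and> s = (Y, An_z n x Y Z a b, a, b + alphaN n a b)"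
  by (auto simp: trA_def An_z_def)

lemma trB_eq_Some_iff:
  "k \<noteq> n \<Longrightarrow> trB n mu k x (Y, Z, a, b) = Some s \<longleftrightarrow>
     Bk_defined n mu k Z \<and> s = (Bk_y n mu k x Y Z a b, Bk_z n mu k Z, a(k := 1 - a k), b + a k - 1/2)"
  unfolding trB_def Bk_defined_def Bk_y_def Bk_z_def Bk_y_off_def Let_def by auto

lemma trB_n_eq_Some_iff:
  "trB n mu n x (Y, Z, a, b) = Some s \<longleftrightarrow>
     Bn_defined n mu Z \<and> s = (Bn_y n mu Y Z a, Bn_z n mu Z, a, b + alphaN n a b - 1/2)"
  unfolding trB_def Bn_defined_def Bn_y_def Bn_z_def by auto

lemma Bk_y_same: "k \<in> {1..n-1} \<Longrightarrow> Bk_y n mu k x Y Z a b k =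
    - x / 2 - (\<Sum>i\<in>{1..n-1} - {k}. Bk_y_off mu k Y Z a i) + Z k / mu k * (Z k * yN n x Y + alphaN n a b)"
  by (simp add: Bk_y_def)

lemma Bk_y_other: "i \<in> {1..n-1} \<Longrightarrow> i \<noteq> k \<Longrightarrow> Bk_y n mu k x Y Z a b i = Bk_y_off mu k Y Z a i"
  by (simp add: Bk_y_def)

lemma Bk_z_same: "k \<in> {1..n-1} \<Longrightarrow> Bk_z n mu k Z k = mu k / Z k"
  by (simp add: Bk_z_def)

lemma Bk_z_other: "i \<in> {1..n-1} \<Longrightarrow> i \<noteq> k \<Longrightarrow> Bk_z n mu k Z i = mu k / Z k - (mu i - mu k) / (Z i - Z k)"
  by (simp add: Bk_z_def)

lemma Bk_definedD:
  assumes "Bk_defined n mu k Z"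
  shows "Z k \<noteq> 0" "mu k \<noteq> 0"
    and "j \<in> {1..n-1} \<Longrightarrow> j \<noteq> k \<Longrightarrow> Z j - Z k \<noteq> 0"
    and "j \<in> {1..n-1} \<Longrightarrow> j \<noteq> k \<Longrightarrow> mu j - mu k \<noteq> 0"
  using assms unfolding Bk_defined_def by auto

lemma alphaN_Ak: "k \<in> {1..n-1} \<Longrightarrow> alphaN n (a(k := - a k)) (b + a k) = alphaN n a b"
  by (simp add: alphaN_def sum_fun_upd algebra_simps del: fun_upd_apply)

lemma alphaN_Bk: "k \<in> {1..n-1} \<Longrightarrow> alphaN n (a(k := 1 - a k)) (b + a k - 1/2) = alphaN n a b"
  by (simp add: alphaN_def sum_fun_upd algebra_simps del: fun_upd_apply)

lemma alphaN_An: "alphaN n a (b + alphaN n a b) = - alphaN n a b"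
  by (simp add: alphaN_def algebra_simps)

lemma alphaN_Bn: "alphaN n a (b + alphaN n a b - 1/2) = 1 - alphaN n a b"
  by (simp add: alphaN_def algebra_simps)

lemma yN_Bk_y:
  assumes "k \<in> {1..n-1}"
  shows "yN n x (Bk_y n mu k x Y Z a b) = - (Z k / mu k * (Z k * yN n x Y + alphaN n a b))"
proof -
  have "(\<Sum>i\<in>{1..n-1} - {k}. Bk_y n mu k x Y Z a b i) = (\<Sum>i\<in>{1..n-1} - {k}. Bk_y_off mu k Y Z a i)"
    by (rule sum.cong) (auto simp: Bk_y_def)
  then show ?thesis
    using assms unfolding yN_def[of n x "Bk_y n mu k x Y Z a b"] sum_remove_index[OF assms]
    by (simp add: Bk_y_def)
qed

section \<open>Involutions\<close>

lemma partial_involution_trA: "k \<noteq> n \<Longrightarrow> partial_involution (trA n mu k x)"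
  by (rule partial_involution_quadI) (auto simp: trA_eq_Some_iff)

lemma partial_involution_trA_n: "partial_involution (trA n mu n x)"
proof (rule partial_involution_quadI)
  fix Y Z a b s1 s2
  assume "trA n mu n x (Y, Z, a, b) = Some s1" "trA n mu n x s1 = Some s2"
  then show "s2 = (Y, Z, a, b)"
    by (auto simp: trA_n_eq_Some_iff An_z_def alphaN_An)
qed

lemma partial_involution_trB_n: "partial_involution (trB n mu n x)"
proof (rule partial_involution_quadI)
  fix Y Z a b s1 s2
  assume "trB n mu n x (Y, Z, a, b) = Some s1" and s2: "trB n mu n x s1 = Some s2"
  then have def: "Bn_defined n mu Z"
    and s1: "s1 = (Bn_y n mu Y Z a, Bn_z n mu Z, a, b + alphaN n a b - 1/2)"
    by (simp_all add: trB_n_eq_Some_iff)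
  have "s2 = (Bn_y n mu (Bn_y n mu Y Z a) (Bn_z n mu Z) a, Bn_z n mu (Bn_z n mu Z), a,
              b + alphaN n a b - 1/2 + (1 - alphaN n a b) - 1/2)"
    using s2 unfolding s1 trB_n_eq_Some_iff alphaN_Bn by simp
  then show "s2 = (Y, Z, a, b)"
    using def by (auto intro!: ext simp: Bn_defined_def Bn_y_def Bn_z_def field_simps)
qed

lemma Bk_z_involutive:
  assumes "Bk_defined n mu k Z"
  shows "Bk_z n mu k (Bk_z n mu k Z) = Z"
proof
  fix j
  have "mu k / (mu k / Z k) - (mu j - mu k) / (mu k / Z k - (mu j - mu k) / (Z j - Z k) - mu k / Z k) = Z j"
    if "j \<in> {1..n-1}" "j \<noteq> k"
    using Bk_definedD[OF assms] Bk_definedD(3,4)[OF assms that] by (simp add: field_simps)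
  then show "Bk_z n mu k (Bk_z n mu k Z) j = Z j"
    using Bk_definedD(1,2)[OF assms] by (auto simp: Bk_z_def)
qed

lemma Bk_y_off_involutive:
  assumes "Bk_defined n mu k Z" "j \<in> {1..n-1}" "j \<noteq> k"
  shows "Bk_y_off mu k (Bk_y n mu k x Y Z a b) (Bk_z n mu k Z) (a(k := c)) j = Y j"
proof -
  have z: "Bk_z n mu k Z j - Bk_z n mu k Z k = - (mu j - mu k) / (Z j - Z k)"
    using assms(2,3) by (simp add: Bk_z_def minus_divide_left)
  have y: "Bk_y n mu k x Y Z a b j = (Z j - Z k) / (mu j - mu k) * ((Z j - Z k) * Y j - a j)"
    using assms(2,3) by (simp add: Bk_y_def Bk_y_off_def)
  have inv: "(- E / D) / E * ((- E / D) * (D / E * (D * w - c)) - c) = w"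
    if "D \<noteq> 0" "E \<noteq> 0" for D E w c :: complex
    using that by (simp add: field_simps)
  show ?thesis
    unfolding Bk_y_off_def[of mu k "Bk_y n mu k x Y Z a b"] z y fun_upd_other[OF assms(3)]
    by (rule inv[OF Bk_definedD(3,4)[OF assms]])
qed

lemma Bk_y_involutive:
  assumes k: "k \<in> {1..n-1}" and def: "Bk_defined n mu k Z"
  shows "Bk_y n mu k x (Bk_y n mu k x Y Z a b) (Bk_z n mu k Z) (a(k := 1 - a k)) (b + a k - 1/2) = Y"
    (is "Bk_y n mu k x ?Y ?Z ?a ?b = Y")
proof
  fix j
  consider "j \<in> {1..n-1} - {k}" | "j = k" | "j \<notin> {1..n-1}"
    by blast
  then show "Bk_y n mu k x ?Y ?Z ?a ?b j = Y j"
  proof cases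
    case 1
    then show ?thesis
      using Bk_y_off_involutive[OF def] by (simp add: Bk_y_def)
  next
    case 2
    have off: "(\<Sum>i\<in>{1..n-1} - {k}. Bk_y_off mu k ?Y ?Z ?a i) = (\<Sum>i\<in>{1..n-1} - {k}. Y i)"
      by (rule sum.cong) (auto simp: Bk_y_off_involutive[OF def])
    have "?Z k / mu k * (?Z k * yN n x ?Y + alphaN n ?a ?b) = - yN n x Y"
      using Bk_definedD(1,2)[OF def] k unfolding yN_Bk_y[OF k] alphaN_Bk[OF k]
      by (simp add: Bk_z_def field_simps)
    then show ?thesis
      using 2 off unfolding Bk_y_def[of n mu k x ?Y] yN_def[of n x Y] sum_remove_index[OF k]
      by simp
  next
    case 3
    then show ?thesis
      using k by (auto simp: Bk_y_def)
  qed
qed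

lemma partial_involution_trB: "k \<in> {1..n-1} \<Longrightarrow> partial_involution (trB n mu k x)"
  by (rule partial_involution_quadI)
    (auto simp: trB_eq_Some_iff Bk_z_involutive Bk_y_involutive)

section \<open>Commutation\<close>

lemma partial_commute_trA_trA:
  "k \<noteq> n \<Longrightarrow> j \<noteq> n \<Longrightarrow> j \<noteq> k \<Longrightarrow> partial_commute (trA n mu k x) (trA n mu j x)"
  by (rule partial_commute_quadI) (auto simp: trA_eq_Some_iff fun_upd_twist)

lemma partial_commute_trA_trA_n:
  assumes k: "k \<in> {1..n-1}"
  shows "partial_commute (trA n mu k x) (trA n mu n x)"
proof (rule partial_commute_quadI)
  fix Y Z a b t1 s1 t2 s2
  assume "trA n mu k x (Y, Z, a, b) = Some t1" "trA n mu n x t1 = Some s1"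
    "trA n mu n x (Y, Z, a, b) = Some t2" "trA n mu k x t2 = Some s2"
  with k show "s1 = s2"
    by (auto intro!: ext simp: trA_eq_Some_iff trA_n_eq_Some_iff An_z_def alphaN_Ak)
qed

lemma Bk_y_off_trA:
  assumes "Y k \<noteq> 0" "k \<noteq> j"
  shows "Bk_y_off mu j Y (Z(k := Z k - a k / Y k)) (a(k := - a k)) i = Bk_y_off mu j Y Z a i"
proof (cases "i = k")
  case True
  have shift: "(z - c / w - z') / e * ((z - c / w - z') * w - - c) = (z - z') / e * ((z - z') * w - c)"
    if "w \<noteq> 0" for z z' c w e :: complex
    using that by (cases "e = 0") (simp_all add: field_simps)
  show ?thesis
    unfolding Bk_y_off_def True fun_upd_same fun_upd_other[OF assms(2)[symmetric]]
    by (rule shift[OF assms(1)])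
qed (use assms in \<open>simp add: Bk_y_off_def\<close>)

lemma Bk_z_trA:
  assumes def: "Bk_defined n mu j Z" and k: "k \<in> {1..n-1}" "k \<noteq> j"
    and yk: "Y k \<noteq> 0" and off: "Bk_y_off mu j Y Z a k \<noteq> 0"
  shows "Bk_z n mu j (Z(k := Z k - a k / Y k)) = (Bk_z n mu j Z)(k := Bk_z n mu j Z k - a k / Bk_y_off mu j Y Z a k)"
proof
  fix i
  have shift: "m - e / (d - c / w) = m - e / d - c / (d / e * (d * w - c))"
    if "d \<noteq> 0" "e \<noteq> 0" "w \<noteq> 0" "d * w - c \<noteq> 0" for m d e c w :: complex
    using that by (simp add: field_simps)
  have "(Z k - Z j) * Y k - a k \<noteq> 0"
    using off by (simp add: Bk_y_off_def)
  note shifted = shift[OF Bk_definedD(3,4)[OF def k] yk this]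
  have regroup: "Z k - a k / Y k - Z j = (Z k - Z j) - a k / Y k"
    by simp
  have "Bk_z n mu j (Z(k := Z k - a k / Y k)) k = Bk_z n mu j Z k - a k / Bk_y_off mu j Y Z a k"
    unfolding Bk_z_other[OF k] Bk_y_off_def fun_upd_same fun_upd_other[OF k(2)[symmetric]] regroup shifted ..
  then show "Bk_z n mu j (Z(k := Z k - a k / Y k)) i
      = ((Bk_z n mu j Z)(k := Bk_z n mu j Z k - a k / Bk_y_off mu j Y Z a k)) i"
    using k by (cases "i = k") (auto simp: Bk_z_def)
qed

lemma partial_commute_trA_trB:
  assumes k: "k \<in> {1..n-1}" and j: "j \<in> {1..n-1}" and jk: "j \<noteq> k"
  shows "partial_commute (trA n mu k x) (trB n mu j x)"
proof (rule partial_commute_quadI)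
  fix Y Z a b t1 s1 t2 s2
  assume AB: "trA n mu k x (Y, Z, a, b) = Some t1" "trB n mu j x t1 = Some s1"
    and BA: "trB n mu j x (Y, Z, a, b) = Some t2" "trA n mu k x t2 = Some s2"
  let ?Z = "Z(k := Z k - a k / Y k)" and ?a = "a(k := - a k)"
  have kn: "k \<noteq> n" "j \<noteq> n"
    using k j by auto
  from AB kn have yk: "Y k \<noteq> 0" and def1: "Bk_defined n mu j ?Z"
    and s1: "s1 = (Bk_y n mu j x Y ?Z ?a (b + a k), Bk_z n mu j ?Z,
                   ?a(j := 1 - a j), b + a k + a j - 1/2)"
    by (auto simp: trA_eq_Some_iff trB_eq_Some_iff jk)
  from BA kn have def: "Bk_defined n mu j Z" and ykB: "Bk_y n mu j x Y Z a b k \<noteq> 0"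
    and s2: "s2 = (Bk_y n mu j x Y Z a b,
                   (Bk_z n mu j Z)(k := Bk_z n mu j Z k - a k / Bk_y n mu j x Y Z a b k),
                   (a(j := 1 - a j))(k := - a k), b + a j - 1/2 + a k)"
    by (auto simp: trA_eq_Some_iff trB_eq_Some_iff jk[symmetric])
  have yB_k: "Bk_y n mu j x Y Z a b k = Bk_y_off mu j Y Z a k"
    using Bk_y_other[OF k jk[symmetric]] .
  have Y: "Bk_y n mu j x Y ?Z ?a (b + a k) = Bk_y n mu j x Y Z a b"
  proof -
    have "(\<Sum>i\<in>{1..n-1} - {j}. Bk_y_off mu j Y ?Z ?a i) = (\<Sum>i\<in>{1..n-1} - {j}. Bk_y_off mu j Y Z a i)"
      using Bk_y_off_trA[of Y k, OF yk] jk by simp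
    then show ?thesis
      using Bk_y_off_trA[of Y k, OF yk] jk alphaN_Ak[OF k] by (auto intro!: ext simp: Bk_y_def)
  qed
  have Z: "Bk_z n mu j ?Z = (Bk_z n mu j Z)(k := Bk_z n mu j Z k - a k / Bk_y n mu j x Y Z a b k)"
    using Bk_z_trA[OF def k jk[symmetric], where Y = Y, OF yk] ykB unfolding yB_k .
  show "s1 = s2"
    unfolding s1 s2 Y Z using jk by (auto simp: fun_upd_twist)
qed

lemma partial_commute_trA_trB_n:
  assumes k: "k \<in> {1..n-1}"
  shows "partial_commute (trA n mu k x) (trB n mu n x)"
proof (rule partial_commute_quadI)
  fix Y Z a b t1 s1 t2 s2
  assume AB: "trA n mu k x (Y, Z, a, b) = Some t1" "trB n mu n x t1 = Some s1"
    and BA: "trB n mu n x (Y, Z, a, b) = Some t2" "trA n mu k x t2 = Some s2"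
  let ?Z = "Z(k := Z k - a k / Y k)" and ?a = "a(k := - a k)"
  have kn: "k \<noteq> n"
    using k by auto
  from AB kn have yk: "Y k \<noteq> 0"
    and s1: "s1 = (Bn_y n mu Y ?Z ?a, Bn_z n mu ?Z, ?a, b + a k + alphaN n a b - 1/2)"
    by (auto simp: trA_eq_Some_iff trB_n_eq_Some_iff alphaN_Ak[OF k])
  from BA kn have def: "Bn_defined n mu Z" and ykB: "Bn_y n mu Y Z a k \<noteq> 0"
    and s2: "s2 = (Bn_y n mu Y Z a, (Bn_z n mu Z)(k := Bn_z n mu Z k - a k / Bn_y n mu Y Z a k),
                   ?a, b + alphaN n a b - 1/2 + a k)"
    by (auto simp: trA_eq_Some_iff trB_n_eq_Some_iff)
  have zk: "Z k \<noteq> 0" "mu k \<noteq> 0"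
    using def k by (auto simp: Bn_defined_def)
  have "(z - c / w) / m * ((z - c / w) * w - - c) = z / m * (z * w - c)" if "w \<noteq> 0" for z c w m :: complex
    using that by (cases "m = 0") (simp_all add: field_simps)
  then have Y: "Bn_y n mu Y ?Z ?a = Bn_y n mu Y Z a"
    using yk by (auto intro!: ext simp: Bn_y_def)
  have "- m / (z - c / w) = - m / z - c / (z / m * (z * w - c))"
    if "z \<noteq> 0" "m \<noteq> 0" "w \<noteq> 0" "z * w - c \<noteq> 0" for z c w m :: complex
    using that by (simp add: field_simps)
  moreover have "Z k * Y k - a k \<noteq> 0"
    using ykB k by (simp add: Bn_y_def)
  ultimately have Z: "Bn_z n mu ?Z = (Bn_z n mu Z)(k := Bn_z n mu Z k - a k / Bn_y n mu Y Z a k)"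
    using k yk zk by (auto intro!: ext simp: Bn_z_def Bn_y_def)
  show "s1 = s2"
    unfolding s1 s2 Y Z by (simp add: algebra_simps)
qed

lemma partial_commute_trA_n_trB:
  assumes k: "k \<in> {1..n-1}"
  shows "partial_commute (trA n mu n x) (trB n mu k x)"
proof (rule partial_commute_quadI)
  fix Y Z a b t1 s1 t2 s2
  assume AB: "trA n mu n x (Y, Z, a, b) = Some t1" "trB n mu k x t1 = Some s1"
    and BA: "trB n mu k x (Y, Z, a, b) = Some t2" "trA n mu n x t2 = Some s2"
  let ?al = "alphaN n a b" and ?yN = "yN n x Y"
  let ?Z = "An_z n x Y Z a b" and ?a = "a(k := 1 - a k)"
  have kn: "k \<noteq> n"
    using k by auto
  from AB kn have yN: "?yN \<noteq> 0" and def1: "Bk_defined n mu k ?Z"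
    and s1: "s1 = (Bk_y n mu k x Y ?Z a (b + ?al), Bk_z n mu k ?Z, ?a, b + ?al + a k - 1/2)"
    by (auto simp: trA_n_eq_Some_iff trB_eq_Some_iff)
  from BA kn have def: "Bk_defined n mu k Z" and yNB: "yN n x (Bk_y n mu k x Y Z a b) \<noteq> 0"
    and s2: "s2 = (Bk_y n mu k x Y Z a b, An_z n x (Bk_y n mu k x Y Z a b) (Bk_z n mu k Z) ?a (b + a k - 1/2),
                   ?a, b + a k - 1/2 + ?al)"
    by (auto simp: trA_n_eq_Some_iff trB_eq_Some_iff alphaN_Bk[OF k])
  note zk = Bk_definedD(1,2)[OF def]
  have zk': "Z k + ?al / ?yN \<noteq> 0"
    using Bk_definedD(1)[OF def1] k by (simp add: An_z_def)
  have w: "Z k * ?yN + ?al \<noteq> 0"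
    using yNB zk unfolding yN_Bk_y[OF k] by simp
  have off: "Bk_y_off mu k Y ?Z a i = Bk_y_off mu k Y Z a i" if "i \<in> {1..n-1}" for i
    using that k by (simp add: Bk_y_off_def An_z_def)
  have "(z + c / w) / m * ((z + c / w) * w + - c) = z / m * (z * w + c)" if "w \<noteq> 0" for z c w m :: complex
    using that by (cases "m = 0") (simp_all add: field_simps)
  then have Y: "Bk_y n mu k x Y ?Z a (b + ?al) = Bk_y n mu k x Y Z a b"
    using off k yN by (auto intro!: ext simp: Bk_y_def alphaN_An An_z_def)
  have "m / (z + c / w) = m / z + c / (- (z / m * (z * w + c)))"
    if "w \<noteq> 0" "z \<noteq> 0" "m \<noteq> 0" "z + c / w \<noteq> 0" "z * w + c \<noteq> 0" for z c w m :: complex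
  proof -
    have "z * (z * w + c) \<noteq> 0"
      using that by simp
    with that show ?thesis
      by (simp add: field_simps)
  qed
  then have "mu k / (Z k + ?al / ?yN) = mu k / Z k + ?al / yN n x (Bk_y n mu k x Y Z a b)"
    unfolding yN_Bk_y[OF k] using yN zk zk' w by blast
  then have Z: "Bk_z n mu k ?Z = An_z n x (Bk_y n mu k x Y Z a b) (Bk_z n mu k Z) ?a (b + a k - 1/2)"
    using k by (auto intro!: ext simp: Bk_z_def An_z_def alphaN_Bk)
  show "s1 = s2"
    unfolding s1 s2 Y Z by (simp add: algebra_simps)
qed

text \<open>
  The rational identities below have nested denominators, which field_simps cannot clear.
  Naming an inverse for each denominator turns them into polynomial identities for algebra.
\<close>

lemma Bk_Bn_y_off_identity:
  fixes zk :: "'a::field"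
  assumes "zk \<noteq> 0" "m \<noteq> 0" "zi \<noteq> 0" "p \<noteq> 0" "zi - zk \<noteq> 0" "p - m \<noteq> 0"
  shows "(m / zk - (p - m) / (zi - zk)) / p * ((m / zk - (p - m) / (zi - zk))
            * ((zi - zk) / (p - m) * ((zi - zk) * y - c)) - c)
       = (- p / zi - - m / zk) / (p - m) * ((- p / zi - - m / zk) * (zi / p * (zi * y - c)) - c)"
proof -
  obtain i1 i2 i3 i4 i5 where e: "zk * i1 = 1" "p * i2 = 1" "(zi - zk) * i3 = 1" "(p - m) * i4 = 1" "zi * i5 = 1"
    using assms by (metis right_inverse)
  show ?thesis
    unfolding divide_inverse e[THEN inverse_unique] using e by algebra
qed

lemma Bk_Bn_y_sum_identity:
  fixes zk :: "'a::field"
  assumes "zk \<noteq> 0" "m \<noteq> 0" "zi \<noteq> 0" "p \<noteq> 0" "zi - zk \<noteq> 0" "p - m \<noteq> 0"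
  shows "m / zk^2 * ((zi - zk) / (p - m) * ((zi - zk) * y - c)) + y
       = (- p / zi - - m / zk) / (p - m) * ((- p / zi - - m / zk) * (zi / p * (zi * y - c)) - c)
         + m / zk^2 * (zi / p * (zi * y - c))"
proof -
  obtain i1 i2 i3 i4 i5 where e: "zk * i1 = 1" "p * i2 = 1" "(zi - zk) * i3 = 1" "(p - m) * i4 = 1" "zi * i5 = 1"
    using assms by (metis right_inverse)
  show ?thesis
    unfolding divide_inverse power_inverse[symmetric] e[THEN inverse_unique] using e by algebra
qed

lemma Bk_Bn_y_diag_identity:
  fixes zk :: "'a::field_char_0"
  assumes "zk \<noteq> 0" "m \<noteq> 0" "m / zk^2 * S1 + SY = S2 + m / zk^2 * SY2"
  shows "(m / zk) / m * ((m / zk) * (- x / 2 - S1 + zk / m * (zk * (- x / 2 - (yk + SY)) + al)) - (1 - ak))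
       = - x / 2 - S2 + (- m / zk) / m * ((- m / zk) * (- x / 2 - (zk / m * (zk * yk - ak) + SY2)) + (1 - al))"
proof -
  obtain i1 i2 where e: "zk * i1 = 1" "m * i2 = 1"
    using assms by (metis right_inverse)
  have S2: "S2 = m / zk^2 * S1 + SY - m / zk^2 * SY2"
    using assms(3) by (simp add: algebra_simps)
  have "inverse (2::'a) * 2 = 1"
    by simp
  then show ?thesis
    unfolding S2 divide_inverse power_inverse[symmetric] e[THEN inverse_unique] using e by algebra
qed

lemma Bk_Bn_definedD:
  assumes "Bk_defined n mu k Z" "Bn_defined n mu Z" "Bn_defined n mu (Bk_z n mu k Z)" "Bk_defined n mu k (Bn_z n mu Z)"
    and k: "k \<in> {1..n-1}" and i: "i \<in> {1..n-1}" "i \<noteq> k"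
  shows "Z i \<noteq> 0" "mu i \<noteq> 0" "Z i - Z k \<noteq> 0" "mu i - mu k \<noteq> 0"
    and "mu k / Z k - (mu i - mu k) / (Z i - Z k) \<noteq> 0" "- mu i / Z i - - mu k / Z k \<noteq> 0"
proof -
  show "Z i \<noteq> 0" "mu i \<noteq> 0"
    using assms(2) i by (auto simp: Bn_defined_def)
  show "Z i - Z k \<noteq> 0" "mu i - mu k \<noteq> 0"
    using Bk_definedD(3,4)[OF assms(1) i] .
  have "Bk_z n mu k Z i \<noteq> 0"
    using assms(3) i by (simp add: Bn_defined_def)
  then show "mu k / Z k - (mu i - mu k) / (Z i - Z k) \<noteq> 0"
    using i by (simp add: Bk_z_def)
  show "- mu i / Z i - - mu k / Z k \<noteq> 0"
    using Bk_definedD(3)[OF assms(4) i] i k by (simp add: Bn_z_def)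
qed

lemma Bn_z_Bk_z_commute:
  assumes def: "Bk_defined n mu k Z" "Bn_defined n mu Z" "Bn_defined n mu (Bk_z n mu k Z)" "Bk_defined n mu k (Bn_z n mu Z)"
    and k: "k \<in> {1..n-1}"
  shows "Bn_z n mu (Bk_z n mu k Z) = Bk_z n mu k (Bn_z n mu Z)"
proof
  fix i
  note c = Bk_Bn_definedD[OF def k]
  have zk: "Z k \<noteq> 0" "mu k \<noteq> 0"
    using Bk_definedD(1,2)[OF def(1)] .
  have "- mu i / (mu k / Z k - (mu i - mu k) / (Z i - Z k))
      = mu k / (- mu k / Z k) - (mu i - mu k) / (- mu i / Z i - - mu k / Z k)"
    if "i \<in> {1..n-1}" "i \<noteq> k"
    using zk c[OF that] by (simp add: field_simps)
  moreover have "- mu k / (mu k / Z k) = mu k / (- mu k / Z k)"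
    using zk by (simp add: field_simps)
  ultimately show "Bn_z n mu (Bk_z n mu k Z) i = Bk_z n mu k (Bn_z n mu Z) i"
    using k by (auto simp: Bn_z_def Bk_z_def)
qed

lemma sum_Bk_y_off_Bn_y:
  assumes def: "Bk_defined n mu k Z" "Bn_defined n mu Z" "Bn_defined n mu (Bk_z n mu k Z)" "Bk_defined n mu k (Bn_z n mu Z)"
    and k: "k \<in> {1..n-1}"
  defines "K \<equiv> {1..n-1} - {k}"
  shows "mu k / (Z k)^2 * sum (Bk_y_off mu k Y Z a) K + sum Y K
       = sum (Bk_y_off mu k (Bn_y n mu Y Z a) (Bn_z n mu Z) a) K + mu k / (Z k)^2 * sum (Bn_y n mu Y Z a) K"
proof -
  let ?Y = "Bn_y n mu Y Z a" and ?Z = "Bn_z n mu Z"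
  have "mu k / (Z k)^2 * Bk_y_off mu k Y Z a i + Y i
      = Bk_y_off mu k ?Y ?Z a i + mu k / (Z k)^2 * ?Y i" if "i \<in> K" for i
  proof -
    have i: "i \<in> {1..n-1}" "i \<noteq> k"
      using that by (auto simp: K_def)
    then show ?thesis
      using Bk_Bn_y_sum_identity[OF Bk_definedD(1,2)[OF def(1)] Bk_Bn_definedD(1-4)[OF def k i]] k
      by (simp add: Bn_y_def Bn_z_def Bk_y_off_def)
  qed
  then have "(\<Sum>i\<in>K. mu k / (Z k)^2 * Bk_y_off mu k Y Z a i + Y i)
      = (\<Sum>i\<in>K. Bk_y_off mu k ?Y ?Z a i + mu k / (Z k)^2 * ?Y i)"
    by (rule sum.cong[OF refl])
  then show ?thesis
    by (simp add: sum.distrib sum_distrib_left)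
qed

lemma Bn_y_Bk_y_commute:
  assumes def: "Bk_defined n mu k Z" "Bn_defined n mu Z" "Bn_defined n mu (Bk_z n mu k Z)" "Bk_defined n mu k (Bn_z n mu Z)"
    and k: "k \<in> {1..n-1}"
  shows "Bn_y n mu (Bk_y n mu k x Y Z a b) (Bk_z n mu k Z) (a(k := 1 - a k))
       = Bk_y n mu k x (Bn_y n mu Y Z a) (Bn_z n mu Z) a (b + alphaN n a b - 1/2)"
    (is "?lhs = ?rhs")
proof
  fix i
  define K where "K = {1..n-1} - {k}"
  let ?Y = "Bn_y n mu Y Z a" and ?Z = "Bn_z n mu Z"
  note c = Bk_Bn_definedD[OF def k]
  have zk: "Z k \<noteq> 0" "mu k \<noteq> 0"
    using Bk_definedD(1,2)[OF def(1)] .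
  have off: "?lhs i = ?rhs i" if "i \<in> K" for i
  proof -
    have "i \<in> {1..n-1}" "i \<noteq> k"
      using that by (auto simp: K_def)
    then show ?thesis
      using Bk_Bn_y_off_identity[OF zk c(1-4)[OF \<open>i \<in> {1..n-1}\<close> \<open>i \<noteq> k\<close>]] k
      by (simp add: Bn_y_def Bk_y_def Bk_z_def Bn_z_def Bk_y_off_def)
  qed
  have sums: "mu k / (Z k)^2 * sum (Bk_y_off mu k Y Z a) K + sum Y K
      = sum (Bk_y_off mu k ?Y ?Z a) K + mu k / (Z k)^2 * sum ?Y K"
    unfolding K_def by (rule sum_Bk_y_off_Bn_y[OF def k])
  have yN: "yN n x Y = - x / 2 - (Y k + sum Y K)" "yN n x ?Y = - x / 2 - (?Y k + sum ?Y K)"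
    unfolding yN_def K_def sum_remove_index[OF k] by simp_all
  have diag: "?lhs k = ?rhs k"
  proof -
    have "?lhs k = (mu k / Z k) / mu k * ((mu k / Z k) * (- x / 2 - sum (Bk_y_off mu k Y Z a) K
          + Z k / mu k * (Z k * (- x / 2 - (Y k + sum Y K)) + alphaN n a b)) - (1 - a k))"
      using k unfolding K_def by (simp add: Bn_y_def Bk_y_def Bk_z_def yN[unfolded K_def])
    also have "\<dots> = - x / 2 - sum (Bk_y_off mu k ?Y ?Z a) K + (- mu k / Z k) / mu k
          * ((- mu k / Z k) * (- x / 2 - (Z k / mu k * (Z k * Y k - a k) + sum ?Y K)) + (1 - alphaN n a b))"
      by (rule Bk_Bn_y_diag_identity[OF zk sums])
    also have "\<dots> = ?rhs k"
      using k unfolding K_def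
      by (simp add: Bk_y_def Bn_z_def yN[unfolded K_def] alphaN_Bn) (simp add: Bn_y_def)
    finally show ?thesis .
  qed
  show "?lhs i = ?rhs i"
    using off diag k by (cases "i \<in> K \<or> i = k") (auto simp: K_def Bn_y_def Bk_y_def)
qed

lemma partial_commute_trB_trB_n:
  assumes k: "k \<in> {1..n-1}"
  shows "partial_commute (trB n mu k x) (trB n mu n x)"
proof (rule partial_commute_quadI)
  fix Y Z a b t1 s1 t2 s2
  assume AB: "trB n mu k x (Y, Z, a, b) = Some t1" "trB n mu n x t1 = Some s1"
    and BA: "trB n mu n x (Y, Z, a, b) = Some t2" "trB n mu k x t2 = Some s2"
  have kn: "k \<noteq> n"
    using k by auto
  from AB kn have def1: "Bk_defined n mu k Z" "Bn_defined n mu (Bk_z n mu k Z)"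
    and s1: "s1 = (Bn_y n mu (Bk_y n mu k x Y Z a b) (Bk_z n mu k Z) (a(k := 1 - a k)),
                   Bn_z n mu (Bk_z n mu k Z), a(k := 1 - a k), b + a k - 1/2 + alphaN n a b - 1/2)"
    by (auto simp: trB_eq_Some_iff trB_n_eq_Some_iff alphaN_Bk[OF k])
  from BA kn have def2: "Bn_defined n mu Z" "Bk_defined n mu k (Bn_z n mu Z)"
    and s2: "s2 = (Bk_y n mu k x (Bn_y n mu Y Z a) (Bn_z n mu Z) a (b + alphaN n a b - 1/2),
                   Bk_z n mu k (Bn_z n mu Z), a(k := 1 - a k), b + alphaN n a b - 1/2 + a k - 1/2)"
    by (auto simp: trB_eq_Some_iff trB_n_eq_Some_iff)
  show "s1 = s2"
    unfolding s1 s2 Bn_y_Bk_y_commute[OF def1(1) def2(1) def1(2) def2(2) k]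
      Bn_z_Bk_z_commute[OF def1(1) def2(1) def1(2) def2(2) k]
    by (simp add: algebra_simps)
qed

lemma Bk_Bj_z_off_identity:
  fixes zk :: "'a::field"
  assumes "zk \<noteq> 0" "zj \<noteq> 0" "zi \<noteq> zk" "zj \<noteq> zk" "zi \<noteq> zj"
    and "mk / zk - (mj - mk) / (zj - zk) \<noteq> 0"
    and "(mk / zk - (mi - mk) / (zi - zk)) - (mk / zk - (mj - mk) / (zj - zk)) \<noteq> 0"
    and "mj / zj - (mk - mj) / (zk - zj) \<noteq> 0"
    and "(mj / zj - (mi - mj) / (zi - zj)) - (mj / zj - (mk - mj) / (zk - zj)) \<noteq> 0"
  shows "mj / (mk / zk - (mj - mk) / (zj - zk))
           - (mi - mj) / ((mk / zk - (mi - mk) / (zi - zk)) - (mk / zk - (mj - mk) / (zj - zk)))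
       = mk / (mj / zj - (mk - mj) / (zk - zj))
           - (mi - mk) / ((mj / zj - (mi - mj) / (zi - zj)) - (mj / zj - (mk - mj) / (zk - zj)))"
proof -
  obtain i1 i2 i3 i4 i5 i6 where e: "zk * i1 = 1" "zj * i2 = 1" "(zi - zk) * i3 = 1" "(zj - zk) * i4 = 1"
      "(zi - zj) * i5 = 1" "(zk - zj) * i6 = 1"
    using assms(1-5) by (metis right_inverse right_minus_eq)
  note E = e[THEN inverse_unique]
  have "mk * i1 - (mj - mk) * i4 \<noteq> 0" "(mk * i1 - (mi - mk) * i3) - (mk * i1 - (mj - mk) * i4) \<noteq> 0"
      "mj * i2 - (mk - mj) * i6 \<noteq> 0" "(mj * i2 - (mi - mj) * i5) - (mj * i2 - (mk - mj) * i6) \<noteq> 0"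
    using assms(6-9) unfolding divide_inverse E by auto
  then obtain j1 j2 j3 j4 where f: "(mk * i1 - (mj - mk) * i4) * j1 = 1"
      "((mk * i1 - (mi - mk) * i3) - (mk * i1 - (mj - mk) * i4)) * j2 = 1"
      "(mj * i2 - (mk - mj) * i6) * j3 = 1" "((mj * i2 - (mi - mj) * i5) - (mj * i2 - (mk - mj) * i6)) * j4 = 1"
    by (metis right_inverse)
  show ?thesis
    unfolding divide_inverse E f[THEN inverse_unique] using e f by algebra
qed

lemma Bk_Bj_z_diag_identity:
  fixes zk :: "'a::field"
  assumes "zk \<noteq> 0" "zj \<noteq> 0" "zj \<noteq> zk"
    and "mk / zk - (mj - mk) / (zj - zk) \<noteq> 0"
    and "mk / zk - (mk / zk - (mj - mk) / (zj - zk)) \<noteq> 0"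
    and "mj / zj - (mk - mj) / (zk - zj) \<noteq> 0"
  shows "mj / (mk / zk - (mj - mk) / (zj - zk)) - (mk - mj) / (mk / zk - (mk / zk - (mj - mk) / (zj - zk)))
       = mk / (mj / zj - (mk - mj) / (zk - zj))"
proof -
  obtain i1 i2 i4 i6 where e: "zk * i1 = 1" "zj * i2 = 1" "(zj - zk) * i4 = 1" "(zk - zj) * i6 = 1"
    using assms(1-3) by (metis right_inverse right_minus_eq)
  note E = e[THEN inverse_unique]
  have "mk * i1 - (mj - mk) * i4 \<noteq> 0" "mk * i1 - (mk * i1 - (mj - mk) * i4) \<noteq> 0" "mj * i2 - (mk - mj) * i6 \<noteq> 0"
    using assms(4-6) unfolding divide_inverse E by auto
  then obtain j1 j2 j3 where f: "(mk * i1 - (mj - mk) * i4) * j1 = 1"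
      "(mk * i1 - (mk * i1 - (mj - mk) * i4)) * j2 = 1" "(mj * i2 - (mk - mj) * i6) * j3 = 1"
    by (metis right_inverse)
  show ?thesis
    unfolding divide_inverse E f[THEN inverse_unique] using e f by algebra
qed

lemma Bk_Bj_y_off_identity:
  fixes zk :: "'a::field"
  assumes "zk \<noteq> 0" "zj \<noteq> 0" "zi \<noteq> zk" "zj \<noteq> zk" "zi \<noteq> zj" "mi \<noteq> mk" "mi \<noteq> mj"
  shows "((mk / zk - (mi - mk) / (zi - zk)) - (mk / zk - (mj - mk) / (zj - zk))) / (mi - mj)
           * (((mk / zk - (mi - mk) / (zi - zk)) - (mk / zk - (mj - mk) / (zj - zk)))
              * ((zi - zk) / (mi - mk) * ((zi - zk) * y - c)) - c)
       = ((mj / zj - (mi - mj) / (zi - zj)) - (mj / zj - (mk - mj) / (zk - zj))) / (mi - mk)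
           * (((mj / zj - (mi - mj) / (zi - zj)) - (mj / zj - (mk - mj) / (zk - zj)))
              * ((zi - zj) / (mi - mj) * ((zi - zj) * y - c)) - c)"
proof -
  obtain i1 i2 i3 i4 i5 i6 i7 i8 where e: "zk * i1 = 1" "zj * i2 = 1" "(zi - zk) * i3 = 1" "(zj - zk) * i4 = 1"
      "(zi - zj) * i5 = 1" "(zk - zj) * i6 = 1" "(mi - mk) * i7 = 1" "(mi - mj) * i8 = 1"
    using assms by (metis right_inverse right_minus_eq)
  show ?thesis
    unfolding divide_inverse e[THEN inverse_unique] using e by algebra
qed

lemma Bk_Bj_y_sum_identity:
  fixes zk :: "'a::field"
  assumes "zk \<noteq> 0" "zj \<noteq> 0" "mk \<noteq> 0" "mj \<noteq> 0" "zi \<noteq> zk" "zj \<noteq> zk" "zi \<noteq> zj"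
    "mi \<noteq> mk" "mi \<noteq> mj" "mj \<noteq> mk"
    and Z2k: "Z2k = mj / zj - (mk - mj) / (zk - zj)"
    and L: "L = (mk - mj) / (zj - zk)^2"
    and C: "C = L * (zk^2 / mk - zj^2 / mj) + Z2k^2 * zj^2 / (mk * mj)"
  shows "((mj / zj - (mi - mj) / (zi - zj)) - Z2k) / (mi - mk)
           * (((mj / zj - (mi - mj) / (zi - zj)) - Z2k) * ((zi - zj) / (mi - mj) * ((zi - zj) * y - c)) - c)
       = L * ((zi - zk) / (mi - mk) * ((zi - zk) * y - c) - (zi - zj) / (mi - mj) * ((zi - zj) * y - c)) + C * y"
proof -
  obtain i1 i2 i3 i4 i5 i6 i7 i8 i9 i10 i11 where e: "zk * i1 = 1" "zj * i2 = 1" "(zi - zk) * i3 = 1"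
      "(zj - zk) * i4 = 1" "(zi - zj) * i5 = 1" "(zk - zj) * i6 = 1" "(mi - mk) * i7 = 1" "(mi - mj) * i8 = 1"
      "mk * i9 = 1" "mj * i10 = 1" "(mk - mj) * i11 = 1"
    using assms(1-10) by (metis right_inverse right_minus_eq)
  show ?thesis
    unfolding C L Z2k divide_inverse inverse_mult_distrib power_inverse[symmetric] e[THEN inverse_unique]
    using e by algebra
qed

lemma Bk_Bj_y_diag_identity:
  fixes zk :: "'a::field_char_0"
  assumes "zk \<noteq> 0" "zj \<noteq> 0" "mk \<noteq> 0" "mj \<noteq> 0" "zj \<noteq> zk" "mj \<noteq> mk"
    and Z1j: "Z1j = mk / zk - (mj - mk) / (zj - zk)"
    and Z2k: "Z2k = mj / zj - (mk - mj) / (zk - zj)"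
    and L: "L = (mk - mj) / (zj - zk)^2"
    and C: "C = L * (zk^2 / mk - zj^2 / mj) + Z2k^2 * zj^2 / (mk * mj)"
    and yn: "yn = - x / 2 - (yk + (yj + SY))"
  shows "(mk / zk - Z1j) / (mk - mj) * ((mk / zk - Z1j)
            * (- x / 2 - ((zj - zk) / (mj - mk) * ((zj - zk) * yj - aj) + S1) + zk / mk * (zk * yn + al))
            - (1 - ak))
       = - x / 2 - ((mj / zj - Z2k) / (mj - mk) * ((mj / zj - Z2k)
            * (- x / 2 - ((zk - zj) / (mk - mj) * ((zk - zj) * yk - ak) + S2) + zj / mj * (zj * yn + al))
            - (1 - aj)) + (L * (S1 - S2) + C * SY))
         + Z2k / mk * (Z2k * (- (zj / mj * (zj * yn + al))) + al)"
proof -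
  obtain i1 i2 i4 i6 i9 i10 i11 i12 where e: "zk * i1 = 1" "zj * i2 = 1" "(zj - zk) * i4 = 1"
      "(zk - zj) * i6 = 1" "mk * i9 = 1" "mj * i10 = 1" "(mk - mj) * i11 = 1" "(mj - mk) * i12 = 1"
    using assms(1-6) by (metis right_inverse right_minus_eq)
  have "inverse (2::'a) * 2 = 1"
    by simp
  then show ?thesis
    unfolding C L Z1j Z2k yn divide_inverse inverse_mult_distrib power_inverse[symmetric] e[THEN inverse_unique]
    using e by algebra
qed

lemma Bk_z_Bk_z_commute_at:
  assumes def: "Bk_defined n mu k Z" "Bk_defined n mu j Z" "Bk_defined n mu j (Bk_z n mu k Z)"
      "Bk_defined n mu k (Bk_z n mu j Z)"
    and k: "k \<in> {1..n-1}" and j: "j \<in> {1..n-1}" and jk: "j \<noteq> k"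
  shows "Bk_z n mu j (Bk_z n mu k Z) k = Bk_z n mu k (Bk_z n mu j Z) k"
proof -
  have zk: "Z k \<noteq> 0" "Z j \<noteq> 0" "Z j \<noteq> Z k"
    using Bk_definedD(1)[OF def(1)] Bk_definedD(1)[OF def(2)] Bk_definedD(3)[OF def(1) j jk] by auto
  have "Bk_z n mu k Z j \<noteq> 0" "Bk_z n mu k Z k - Bk_z n mu k Z j \<noteq> 0" "Bk_z n mu j Z k \<noteq> 0"
    using Bk_definedD(1)[OF def(3)] Bk_definedD(3)[OF def(3) k jk[symmetric]] Bk_definedD(1)[OF def(4)] .
  then show ?thesis
    using Bk_Bj_z_diag_identity[OF zk, of "mu k" "mu j"] k j jk by (simp add: Bk_z_def)
qed

lemma Bk_z_Bk_z_commute: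
  assumes def: "Bk_defined n mu k Z" "Bk_defined n mu j Z" "Bk_defined n mu j (Bk_z n mu k Z)"
      "Bk_defined n mu k (Bk_z n mu j Z)"
    and k: "k \<in> {1..n-1}" and j: "j \<in> {1..n-1}" and jk: "j \<noteq> k"
  shows "Bk_z n mu j (Bk_z n mu k Z) = Bk_z n mu k (Bk_z n mu j Z)"
proof
  fix i
  consider "i \<in> {1..n-1}" "i \<noteq> j" "i \<noteq> k" | "i = k" | "i = j" | "i \<notin> {1..n-1}"
    by blast
  then show "Bk_z n mu j (Bk_z n mu k Z) i = Bk_z n mu k (Bk_z n mu j Z) i"
  proof cases
    case 1
    have z: "Z k \<noteq> 0" "Z j \<noteq> 0" "Z i \<noteq> Z k" "Z j \<noteq> Z k" "Z i \<noteq> Z j"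
      using Bk_definedD(1)[OF def(1)] Bk_definedD(1)[OF def(2)] Bk_definedD(3)[OF def(1) 1(1,3)]
        Bk_definedD(3)[OF def(1) j jk] Bk_definedD(3)[OF def(2) 1(1,2)] by auto
    have "Bk_z n mu k Z j \<noteq> 0" "Bk_z n mu k Z i - Bk_z n mu k Z j \<noteq> 0"
      "Bk_z n mu j Z k \<noteq> 0" "Bk_z n mu j Z i - Bk_z n mu j Z k \<noteq> 0"
      using Bk_definedD(1)[OF def(3)] Bk_definedD(3)[OF def(3) 1(1,2)]
        Bk_definedD(1)[OF def(4)] Bk_definedD(3)[OF def(4) 1(1,3)] .
    then show ?thesis
      using Bk_Bj_z_off_identity[OF z, of "mu k" "mu j" "mu i"] 1 k j jk by (simp add: Bk_z_def)
  next
    case 2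
    then show ?thesis
      using Bk_z_Bk_z_commute_at[OF def k j jk] by simp
  next
    case 3
    then show ?thesis
      using Bk_z_Bk_z_commute_at[OF def(2,1,4,3) j k jk[symmetric]] by simp
  qed (use j k in \<open>auto simp: Bk_z_def\<close>)
qed

lemma sum_Bk_y_off_Bk_y:
  assumes def: "Bk_defined n mu k Z" "Bk_defined n mu j Z"
    and k: "k \<in> {1..n-1}" and j: "j \<in> {1..n-1}" and jk: "j \<noteq> k"
  defines "L \<equiv> {1..n-1} - {j, k}" and "Z2k \<equiv> mu j / Z j - (mu k - mu j) / (Z k - Z j)"
    and "Lc \<equiv> (mu k - mu j) / (Z j - Z k)^2"
    and "C \<equiv> (mu k - mu j) / (Z j - Z k)^2 * ((Z k)^2 / mu k - (Z j)^2 / mu j)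
                + (mu j / Z j - (mu k - mu j) / (Z k - Z j))^2 * (Z j)^2 / (mu k * mu j)"
  shows "sum (Bk_y_off mu k (Bk_y n mu j x Y Z a b) (Bk_z n mu j Z) a) L
      = Lc * (sum (Bk_y_off mu k Y Z a) L - sum (Bk_y_off mu j Y Z a) L) + C * sum Y L"
proof -
  let ?Y = "Bk_y n mu j x Y Z a b" and ?Z = "Bk_z n mu j Z"
  have z: "Z k \<noteq> 0" "Z j \<noteq> 0" "mu k \<noteq> 0" "mu j \<noteq> 0" "Z j \<noteq> Z k" "mu j \<noteq> mu k"
    using Bk_definedD[OF def(1)] Bk_definedD[OF def(2)] Bk_definedD(3,4)[OF def(1) j jk] by auto
  have C: "C = Lc * ((Z k)^2 / mu k - (Z j)^2 / mu j) + Z2k^2 * (Z j)^2 / (mu k * mu j)"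
    unfolding C_def Lc_def Z2k_def ..
  have "Bk_y_off mu k ?Y ?Z a i = Lc * (Bk_y_off mu k Y Z a i - Bk_y_off mu j Y Z a i) + C * Y i"
    if "i \<in> L" for i
  proof -
    have i: "i \<in> {1..n-1}" "i \<noteq> j" "i \<noteq> k"
      using that by (auto simp: L_def)
    have zi: "Z i \<noteq> Z k" "Z i \<noteq> Z j" "mu i \<noteq> mu k" "mu i \<noteq> mu j"
      using Bk_definedD(3,4)[OF def(1) i(1,3)] Bk_definedD(3,4)[OF def(2) i(1,2)] by auto
    have "Bk_y_off mu k ?Y ?Z a i = ((mu j / Z j - (mu i - mu j) / (Z i - Z j)) - Z2k) / (mu i - mu k)
        * (((mu j / Z j - (mu i - mu j) / (Z i - Z j)) - Z2k)
           * ((Z i - Z j) / (mu i - mu j) * ((Z i - Z j) * Y i - a i)) - a i)"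
      using i k jk unfolding Bk_y_off_def[of mu k] Z2k_def by (simp add: Bk_y_def Bk_z_def Bk_y_off_def)
    then show ?thesis
      unfolding Bk_y_off_def
      by (rule trans, intro Bk_Bj_y_sum_identity[OF z(1-4) zi(1) z(5) zi(2-4) z(6) meta_eq_to_obj_eq[OF Z2k_def] meta_eq_to_obj_eq[OF Lc_def] C])
  qed
  then have "(\<Sum>i\<in>L. Bk_y_off mu k ?Y ?Z a i)
      = (\<Sum>i\<in>L. Lc * (Bk_y_off mu k Y Z a i - Bk_y_off mu j Y Z a i) + C * Y i)"
    by (rule sum.cong[OF refl])
  then show ?thesis
    by (simp add: sum_subtractf sum.distrib sum_distrib_left right_diff_distrib)
qed

lemma Bk_y_Bk_y_commute_at:
  assumes def: "Bk_defined n mu k Z" "Bk_defined n mu j Z"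
    and k: "k \<in> {1..n-1}" and j: "j \<in> {1..n-1}" and jk: "j \<noteq> k"
  shows "Bk_y n mu j x (Bk_y n mu k x Y Z a b) (Bk_z n mu k Z) (a(k := 1 - a k)) (b + a k - 1/2) k
       = Bk_y n mu k x (Bk_y n mu j x Y Z a b) (Bk_z n mu j Z) (a(j := 1 - a j)) (b + a j - 1/2) k"
proof -
  define L where "L = {1..n-1} - {j, k}"
  let ?Y = "Bk_y n mu j x Y Z a b" and ?Z = "Bk_z n mu j Z"
  have sk: "sum f ({1..n-1} - {k}) = f j + sum f L" and sj: "sum f ({1..n-1} - {j}) = f k + sum f L"
    for f :: "nat \<Rightarrow> complex"
    unfolding L_def using sum_diff_insert[of "{1..n-1}" j k f] sum_diff_insert[of "{1..n-1}" k j f] j k jk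
    by (auto simp: insert_commute)
  have z: "Z k \<noteq> 0" "Z j \<noteq> 0" "mu k \<noteq> 0" "mu j \<noteq> 0" "Z j \<noteq> Z k" "mu j \<noteq> mu k"
    using Bk_definedD[OF def(1)] Bk_definedD[OF def(2)] Bk_definedD(3,4)[OF def(1) j jk] by auto
  define Z1j where "Z1j = mu k / Z k - (mu j - mu k) / (Z j - Z k)"
  define Z2k where "Z2k = mu j / Z j - (mu k - mu j) / (Z k - Z j)"
  define Lc where "Lc = (mu k - mu j) / (Z j - Z k)^2"
  define C where "C = Lc * ((Z k)^2 / mu k - (Z j)^2 / mu j) + Z2k^2 * (Z j)^2 / (mu k * mu j)"
  define yn where "yn = yN n x Y"
  define al where "al = alphaN n a b"
  have yn_split: "yn = - x / 2 - (Y k + (Y j + sum Y L))"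
    unfolding yn_def yN_def sum_remove_index[OF k] sk ..
  have S3: "sum (Bk_y_off mu k ?Y ?Z a) L
      = Lc * (sum (Bk_y_off mu k Y Z a) L - sum (Bk_y_off mu j Y Z a) L) + C * sum Y L"
    using sum_Bk_y_off_Bk_y[OF def k j jk, of x Y a b] unfolding L_def Lc_def C_def Z2k_def .
  have "Bk_y n mu j x (Bk_y n mu k x Y Z a b) (Bk_z n mu k Z) (a(k := 1 - a k)) (b + a k - 1/2) k
      = (mu k / Z k - Z1j) / (mu k - mu j) * ((mu k / Z k - Z1j)
          * (- x / 2 - ((Z j - Z k) / (mu j - mu k) * ((Z j - Z k) * Y j - a j) + sum (Bk_y_off mu k Y Z a) L)
             + Z k / mu k * (Z k * yn + al)) - (1 - a k))"
    unfolding Bk_y_other[OF k jk[symmetric]] Bk_y_off_def[of mu j] Bk_z_same[OF k] Bk_z_other[OF j jk]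
      Bk_y_same[OF k] sk Z1j_def yn_def al_def
    using jk by (simp add: Bk_y_off_def)
  also have "\<dots> = - x / 2 - ((mu j / Z j - Z2k) / (mu j - mu k) * ((mu j / Z j - Z2k)
          * (- x / 2 - ((Z k - Z j) / (mu k - mu j) * ((Z k - Z j) * Y k - a k) + sum (Bk_y_off mu j Y Z a) L)
             + Z j / mu j * (Z j * yn + al)) - (1 - a j))
          + (Lc * (sum (Bk_y_off mu k Y Z a) L - sum (Bk_y_off mu j Y Z a) L) + C * sum Y L))
        + Z2k / mu k * (Z2k * (- (Z j / mu j * (Z j * yn + al))) + al)"
    by (rule Bk_Bj_y_diag_identity[OF z Z1j_def Z2k_def Lc_def C_def yn_split])
  also have "\<dots> = Bk_y n mu k x ?Y ?Z (a(j := 1 - a j)) (b + a j - 1/2) k"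
  proof -
    have "sum (Bk_y_off mu k ?Y ?Z (a(j := 1 - a j))) L = sum (Bk_y_off mu k ?Y ?Z a) L"
      by (rule sum.cong) (auto simp: L_def Bk_y_off_def)
    moreover have "yN n x ?Y = - (Z j / mu j * (Z j * yn + al))"
      unfolding yN_Bk_y[OF j] yn_def al_def ..
    ultimately show ?thesis
      unfolding Bk_y_same[OF k] sk Bk_y_off_def[of mu k ?Y ?Z _ j] Bk_y_same[OF j] sj Bk_z_same[OF j]
        Bk_z_other[OF k jk[symmetric]] S3[symmetric] Z2k_def yn_def al_def alphaN_Bk[OF j]
      using jk by (simp add: Bk_y_off_def[of mu j Y Z a k])
  qed
  finally show ?thesis .
qed

lemma Bk_y_Bk_y_commute:
  assumes def: "Bk_defined n mu k Z" "Bk_defined n mu j Z"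
    and k: "k \<in> {1..n-1}" and j: "j \<in> {1..n-1}" and jk: "j \<noteq> k"
  shows "Bk_y n mu j x (Bk_y n mu k x Y Z a b) (Bk_z n mu k Z) (a(k := 1 - a k)) (b + a k - 1/2)
       = Bk_y n mu k x (Bk_y n mu j x Y Z a b) (Bk_z n mu j Z) (a(j := 1 - a j)) (b + a j - 1/2)"
proof
  fix i
  consider "i \<in> {1..n-1}" "i \<noteq> j" "i \<noteq> k" | "i = k" | "i = j" | "i \<notin> {1..n-1}"
    by blast
  then show "Bk_y n mu j x (Bk_y n mu k x Y Z a b) (Bk_z n mu k Z) (a(k := 1 - a k)) (b + a k - 1/2) i
       = Bk_y n mu k x (Bk_y n mu j x Y Z a b) (Bk_z n mu j Z) (a(j := 1 - a j)) (b + a j - 1/2) i"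
  proof cases
    case 1
    have "Z k \<noteq> 0" "Z j \<noteq> 0" "Z i \<noteq> Z k" "Z j \<noteq> Z k" "Z i \<noteq> Z j" "mu i \<noteq> mu k" "mu i \<noteq> mu j"
      using Bk_definedD(1)[OF def(1)] Bk_definedD(1)[OF def(2)] Bk_definedD(3,4)[OF def(1) 1(1,3)]
        Bk_definedD(3)[OF def(1) j jk] Bk_definedD(3,4)[OF def(2) 1(1,2)] by auto
    then show ?thesis
      unfolding Bk_y_other[OF 1(1,2)] Bk_y_other[OF 1(1,3)] Bk_y_off_def[of mu j] Bk_y_off_def[of mu k]
        Bk_z_other[OF 1(1,2)] Bk_z_other[OF 1(1,3)] Bk_z_other[OF j jk] Bk_z_other[OF k jk[symmetric]]
        Bk_y_other[OF 1(1,2)] Bk_y_other[OF 1(1,3)] fun_upd_other[OF 1(2)] fun_upd_other[OF 1(3)]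
      by (rule Bk_Bj_y_off_identity)
  next
    case 2
    then show ?thesis
      using Bk_y_Bk_y_commute_at[OF def k j jk] by simp
  next
    case 3
    then show ?thesis
      using Bk_y_Bk_y_commute_at[OF def(2,1) j k jk[symmetric]] by simp
  qed (use j k in \<open>auto simp: Bk_y_def\<close>)
qed

lemma partial_commute_trB_trB:
  assumes k: "k \<in> {1..n-1}" and j: "j \<in> {1..n-1}" and jk: "j \<noteq> k"
  shows "partial_commute (trB n mu k x) (trB n mu j x)"
proof (rule partial_commute_quadI)
  fix Y Z a b t1 s1 t2 s2
  assume AB: "trB n mu k x (Y, Z, a, b) = Some t1" "trB n mu j x t1 = Some s1"
    and BA: "trB n mu j x (Y, Z, a, b) = Some t2" "trB n mu k x t2 = Some s2"
  have kn: "k \<noteq> n" "j \<noteq> n"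
    using k j by auto
  from AB kn have def1: "Bk_defined n mu k Z" "Bk_defined n mu j (Bk_z n mu k Z)"
    and s1: "s1 = (Bk_y n mu j x (Bk_y n mu k x Y Z a b) (Bk_z n mu k Z) (a(k := 1 - a k)) (b + a k - 1/2),
                   Bk_z n mu j (Bk_z n mu k Z), (a(k := 1 - a k))(j := 1 - a j), b + a k - 1/2 + a j - 1/2)"
    by (auto simp: trB_eq_Some_iff jk)
  from BA kn have def2: "Bk_defined n mu j Z" "Bk_defined n mu k (Bk_z n mu j Z)"
    and s2: "s2 = (Bk_y n mu k x (Bk_y n mu j x Y Z a b) (Bk_z n mu j Z) (a(j := 1 - a j)) (b + a j - 1/2),
                   Bk_z n mu k (Bk_z n mu j Z), (a(j := 1 - a j))(k := 1 - a k), b + a j - 1/2 + a k - 1/2)"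
    by (auto simp: trB_eq_Some_iff jk[symmetric])
  show "s1 = s2"
    unfolding s1 s2 Bk_y_Bk_y_commute[OF def1(1) def2(1) k j jk]
      Bk_z_Bk_z_commute[OF def1(1) def2(1) def1(2) def2(2) k j jk]
    using jk by (auto simp: fun_upd_twist)
qed

section \<open>Preservation of solutions\<close>

lemma sys_solutionD:
  assumes "sys_solution n mu a b S y z" "x \<in> S" "j \<in> {1..n-1}"
  shows "(y j has_field_derivative (2 * y j x * (z j x + vv n b y z x) - a j)) (at x)"
    and "(z j has_field_derivative (- z j x * (z j x + 2 * vv n b y z x) - mu j)) (at x)"
  using assms unfolding sys_solution_def by auto

lemma has_field_derivative_transform_open_eq:
  assumes "(f has_field_derivative D) (at x)" "open S" "x \<in> S" "\<And>t. t \<in> S \<Longrightarrow> g t = f t" "D = D'"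
  shows "(g has_field_derivative D') (at x)"
  using has_field_derivative_transform_within_open[OF assms(1-3)] assms(4,5) by auto

lemma vv_mult_self:
  "x \<noteq> 0 \<Longrightarrow> vv n b y z x * x = 2 * ((\<Sum>j=1..n-1. y j x * z j x) + b)"
  unfolding vv_def by (simp add: field_simps)

lemma has_field_derivative_yN:
  assumes "sys_solution n mu a b S y z" "x \<in> S" "x \<noteq> 0"
  shows "((\<lambda>t. yN n t (\<lambda>j. y j t)) has_field_derivative
           (2 * vv n b y z x * yN n x (\<lambda>j. y j x) - alphaN n a b)) (at x)"
proof -
  let ?v = "vv n b y z x"
  have "((\<lambda>t. - t / 2 - (\<Sum>j=1..n-1. y j t)) has_field_derivative
          (- 1/2 - (\<Sum>j=1..n-1. 2 * y j x * (z j x + ?v) - a j))) (at x)"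
    by (intro DERIV_diff DERIV_sum sys_solutionD[OF assms(1,2)]) (auto intro!: derivative_eq_intros)
  moreover have "- 1/2 - (\<Sum>j=1..n-1. 2 * y j x * (z j x + ?v) - a j)
      = 2 * ?v * yN n x (\<lambda>j. y j x) - alphaN n a b"
  proof -
    have "(\<Sum>j=1..n-1. 2 * y j x * (z j x + ?v) - a j)
        = 2 * (\<Sum>j=1..n-1. y j x * z j x) + 2 * ?v * (\<Sum>j=1..n-1. y j x) - (\<Sum>j=1..n-1. a j)"
      by (simp add: sum_subtractf sum.distrib sum_distrib_left algebra_simps)
    then show ?thesis
      using vv_mult_self[OF assms(3), of n b y z] unfolding yN_def alphaN_def
      by (simp add: algebra_simps)
  qed
  ultimately show ?thesis
    unfolding yN_def by simp
qed

lemma sys_solution_trA: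
  assumes k: "k \<in> {1..n-1}" and S: "open S" "0 \<notin> S" and sol: "sys_solution n mu a b S y z"
    and T: "\<forall>x\<in>S. trA n mu k x (\<lambda>j. y j x, \<lambda>j. z j x, a, b) = Some (\<lambda>j. y' j x, \<lambda>j. z' j x, a', b')"
  shows "sys_solution n mu a' b' S y' z'"
  unfolding sys_solution_def
proof (intro ballI conjI)
  fix x j
  assume x: "x \<in> S" and j: "j \<in> {1..n-1}"
  have kn: "k \<noteq> n"
    using k by auto
  have H: "y k t \<noteq> 0 \<and> (\<forall>i. y' i t = y i t) \<and> (\<forall>i. z' i t = (if i = k then z k t - a k / y k t else z i t))
      \<and> a' = a(k := - a k) \<and> b' = b + a k" if "t \<in> S" for t
    using T that kn by (auto simp: trA_eq_Some_iff fun_eq_iff)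
  let ?v = "vv n b y z x"
  have v: "vv n b' y' z' x = ?v"
  proof -
    have "(\<Sum>i=1..n-1. y' i x * z' i x) = (\<Sum>i=1..n-1. y i x * z i x + (if i = k then - a k else 0))"
      using H[OF x] by (intro sum.cong) (auto simp: field_simps)
    then show ?thesis
      using H[OF x] k unfolding vv_def by (simp add: sum.distrib)
  qed
  show "(y' j has_field_derivative (2 * y' j x * (z' j x + vv n b' y' z' x) - a' j)) (at x)"
  proof (rule has_field_derivative_transform_open_eq[OF sys_solutionD(1)[OF sol x j] S(1) x])
    show "y' j t = y j t" if "t \<in> S" for t
      using H[OF that] by simp
    show "2 * y j x * (z j x + ?v) - a j = 2 * y' j x * (z' j x + vv n b' y' z' x) - a' j"
      unfolding v using H[OF x] by (auto simp: field_simps)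
  qed
  show "(z' j has_field_derivative (- z' j x * (z' j x + 2 * vv n b' y' z' x) - mu j)) (at x)"
  proof (cases "j = k")
    case False
    show ?thesis
    proof (rule has_field_derivative_transform_open_eq[OF sys_solutionD(2)[OF sol x j] S(1) x])
      show "z' j t = z j t" if "t \<in> S" for t
        using H[OF that] False by simp
      show "- z j x * (z j x + 2 * ?v) - mu j = - z' j x * (z' j x + 2 * vv n b' y' z' x) - mu j"
        unfolding v using H[OF x] False by simp
    qed
  next
    case True
    have "((\<lambda>t. z k t - a k / y k t) has_field_derivative (- z k x * (z k x + 2 * ?v) - mu k)
            - (0 * y k x - a k * (2 * y k x * (z k x + ?v) - a k)) / (y k x * y k x)) (at x)"
      using H[OF x] by (intro DERIV_diff DERIV_divide sys_solutionD[OF sol x k] DERIV_const) auto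
    then show ?thesis
    proof (rule has_field_derivative_transform_open_eq[OF _ S(1) x])
      show "z' j t = z k t - a k / y k t" if "t \<in> S" for t
        using H[OF that] True by simp
      show "(- z k x * (z k x + 2 * ?v) - mu k) - (0 * y k x - a k * (2 * y k x * (z k x + ?v) - a k)) / (y k x * y k x)
          = - z' j x * (z' j x + 2 * vv n b' y' z' x) - mu j"
        unfolding v using H[OF x] True by (simp add: field_simps)
    qed
  qed
qed

lemma sys_solution_trA_n:
  assumes S: "open S" "0 \<notin> S" and sol: "sys_solution n mu a b S y z"
    and T: "\<forall>x\<in>S. trA n mu n x (\<lambda>j. y j x, \<lambda>j. z j x, a, b) = Some (\<lambda>j. y' j x, \<lambda>j. z' j x, a', b')"
  shows "sys_solution n mu a' b' S y' z'"
  unfolding sys_solution_def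
proof (intro ballI conjI)
  fix x j
  assume x: "x \<in> S" and j: "j \<in> {1..n-1}"
  let ?yN = "\<lambda>t. yN n t (\<lambda>j. y j t)" and ?al = "alphaN n a b"
  have H: "?yN t \<noteq> 0 \<and> (\<forall>i. y' i t = y i t) \<and> (\<forall>i\<in>{1..n-1}. z' i t = z i t + ?al / ?yN t)
      \<and> a' = a \<and> b' = b + ?al" if "t \<in> S" for t
    using T that by (auto simp: trA_n_eq_Some_iff An_z_def fun_eq_iff)
  have x0: "x \<noteq> 0"
    using x S by auto
  let ?v = "vv n b y z x" and ?w = "?al / ?yN x"
  have v: "vv n b' y' z' x = ?v - ?w"
  proof -
    have "(\<Sum>i=1..n-1. y' i x * z' i x) = (\<Sum>i=1..n-1. y i x * z i x + ?w * y i x)"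
      using H[OF x] by (intro sum.cong) (auto simp: algebra_simps)
    also have "\<dots> = (\<Sum>i=1..n-1. y i x * z i x) + ?w * (- x / 2 - ?yN x)"
      by (simp add: sum.distrib sum_distrib_left yN_def)
    finally have yz: "(\<Sum>i=1..n-1. y' i x * z' i x) = (\<Sum>i=1..n-1. y i x * z i x) + ?w * (- x / 2 - ?yN x)" .
    show ?thesis
      using H[OF x] x0 unfolding vv_def yz by (simp add: field_simps)
  qed
  show "(y' j has_field_derivative (2 * y' j x * (z' j x + vv n b' y' z' x) - a' j)) (at x)"
  proof (rule has_field_derivative_transform_open_eq[OF sys_solutionD(1)[OF sol x j] S(1) x])
    show "y' j t = y j t" if "t \<in> S" for t
      using H[OF that] by simp
    show "2 * y j x * (z j x + ?v) - a j = 2 * y' j x * (z' j x + vv n b' y' z' x) - a' j"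
      unfolding v using H[OF x] j by simp
  qed
  have "((\<lambda>t. z j t + ?al / ?yN t) has_field_derivative (- z j x * (z j x + 2 * ?v) - mu j)
          + (0 * ?yN x - ?al * (2 * ?v * ?yN x - ?al)) / (?yN x * ?yN x)) (at x)"
    using H[OF x] by (intro DERIV_add DERIV_divide sys_solutionD[OF sol x j] DERIV_const
        has_field_derivative_yN[OF sol x x0]) auto
  then show "(z' j has_field_derivative (- z' j x * (z' j x + 2 * vv n b' y' z' x) - mu j)) (at x)"
  proof (rule has_field_derivative_transform_open_eq[OF _ S(1) x])
    show "z' j t = z j t + ?al / ?yN t" if "t \<in> S" for t
      using H[OF that] j by simp
    show "(- z j x * (z j x + 2 * ?v) - mu j) + (0 * ?yN x - ?al * (2 * ?v * ?yN x - ?al)) / (?yN x * ?yN x)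
        = - z' j x * (z' j x + 2 * vv n b' y' z' x) - mu j"
      unfolding v using H[OF x] j by (simp add: field_simps)
  qed
qed

lemma sys_solution_trB_n:
  assumes S: "open S" "0 \<notin> S" and sol: "sys_solution n mu a b S y z"
    and T: "\<forall>x\<in>S. trB n mu n x (\<lambda>j. y j x, \<lambda>j. z j x, a, b) = Some (\<lambda>j. y' j x, \<lambda>j. z' j x, a', b')"
  shows "sys_solution n mu a' b' S y' z'"
  unfolding sys_solution_def
proof (intro ballI conjI)
  fix x j
  assume x: "x \<in> S" and j: "j \<in> {1..n-1}"
  have H: "(\<forall>i\<in>{1..n-1}. z i t \<noteq> 0 \<and> mu i \<noteq> 0 \<and> y' i t = z i t / mu i * (z i t * y i t - a i)
        \<and> z' i t = - mu i / z i t) \<and> a' = a \<and> b' = b + alphaN n a b - 1/2" if "t \<in> S" for t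
    using T that by (auto simp: trB_n_eq_Some_iff Bn_defined_def Bn_y_def Bn_z_def fun_eq_iff)
  let ?v = "vv n b y z x"
  have v: "vv n b' y' z' x = - ?v"
  proof -
    have "(\<Sum>i=1..n-1. y' i x * z' i x) = (\<Sum>i=1..n-1. a i - y i x * z i x)"
      using H[OF x] by (intro sum.cong) (auto simp: field_simps)
    then have yz: "(\<Sum>i=1..n-1. y' i x * z' i x) = (\<Sum>i=1..n-1. a i) - (\<Sum>i=1..n-1. y i x * z i x)"
      by (simp add: sum_subtractf)
    have "b' = - b - (\<Sum>i=1..n-1. a i)"
      using H[OF x] unfolding alphaN_def by simp
    then show ?thesis
      unfolding vv_def yz by (simp add: algebra_simps)
  qed
  have zj: "z j x \<noteq> 0" "mu j \<noteq> 0"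
    using H[OF x] j by auto
  have "((\<lambda>t. z j t / mu j * (z j t * y j t - a j)) has_field_derivative
          z j x / mu j * (z j x * (2 * y j x * (z j x + ?v) - a j) + (- z j x * (z j x + 2 * ?v) - mu j) * y j x - 0)
          + ((- z j x * (z j x + 2 * ?v) - mu j) * mu j - z j x * 0) / (mu j * mu j) * (z j x * y j x - a j)) (at x)"
    by (intro DERIV_mult' DERIV_divide DERIV_diff sys_solutionD[OF sol x j] DERIV_const zj)
  then show "(y' j has_field_derivative (2 * y' j x * (z' j x + vv n b' y' z' x) - a' j)) (at x)"
  proof (rule has_field_derivative_transform_open_eq[OF _ S(1) x])
    show "y' j t = z j t / mu j * (z j t * y j t - a j)" if "t \<in> S" for t
      using H[OF that] j by auto
    show "z j x / mu j * (z j x * (2 * y j x * (z j x + ?v) - a j) + (- z j x * (z j x + 2 * ?v) - mu j) * y j x - 0)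
          + ((- z j x * (z j x + 2 * ?v) - mu j) * mu j - z j x * 0) / (mu j * mu j) * (z j x * y j x - a j)
        = 2 * y' j x * (z' j x + vv n b' y' z' x) - a' j"
      unfolding v using H[OF x] j zj by (simp add: field_simps)
  qed
  have "((\<lambda>t. - mu j / z j t) has_field_derivative
          (0 * z j x - (- mu j) * (- z j x * (z j x + 2 * ?v) - mu j)) / (z j x * z j x)) (at x)"
    by (intro DERIV_divide sys_solutionD[OF sol x j] DERIV_const zj)
  then show "(z' j has_field_derivative (- z' j x * (z' j x + 2 * vv n b' y' z' x) - mu j)) (at x)"
  proof (rule has_field_derivative_transform_open_eq[OF _ S(1) x])
    show "z' j t = - mu j / z j t" if "t \<in> S" for t
      using H[OF that] j by auto
    show "(0 * z j x - (- mu j) * (- z j x * (z j x + 2 * ?v) - mu j)) / (z j x * z j x)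
        = - z' j x * (z' j x + 2 * vv n b' y' z' x) - mu j"
      unfolding v using H[OF x] j zj by (simp add: field_simps)
  qed
qed

lemma vv_Bk:
  assumes k: "k \<in> {1..n-1}" and def: "Bk_defined n mu k Z" and x: "x \<noteq> 0"
  shows "vv n (b + a k - 1/2) (\<lambda>j _. Bk_y n mu k x Y Z a b j) (\<lambda>j _. Bk_z n mu k Z j) x
       = - (mu k / Z k + Z k) - vv n b (\<lambda>j _. Y j) (\<lambda>j _. Z j) x"
proof -
  define K where "K = {1..n-1} - {k}"
  define Q where "Q = (\<Sum>i\<in>K. Bk_y_off mu k Y Z a i)"
  have zk: "Z k \<noteq> 0" "mu k \<noteq> 0"
    using Bk_definedD(1,2)[OF def] .
  have "Bk_y n mu k x Y Z a b i * Bk_z n mu k Z i = mu k / Z k * Bk_y_off mu k Y Z a i - (Z i * Y i - Z k * Y i - a i)"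
    if "i \<in> K" for i
  proof -
    have i: "i \<in> {1..n-1}" "i \<noteq> k"
      using that by (auto simp: K_def)
    have "d / e * w * (m - e / d) = m * (d / e * w) - w" if "d \<noteq> 0" "e \<noteq> 0" for d e w m :: complex
      using that by (simp add: field_simps)
    note id = this[OF Bk_definedD(3,4)[OF def i]]
    show ?thesis
      unfolding Bk_y_other[OF i] Bk_z_other[OF i] Bk_y_off_def id by (simp add: algebra_simps)
  qed
  then have "(\<Sum>i\<in>K. Bk_y n mu k x Y Z a b i * Bk_z n mu k Z i)
      = (\<Sum>i\<in>K. mu k / Z k * Bk_y_off mu k Y Z a i - (Z i * Y i - Z k * Y i - a i))"
    by (rule sum.cong[OF refl])
  then have off: "(\<Sum>i\<in>K. Bk_y n mu k x Y Z a b i * Bk_z n mu k Z i)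
      = mu k / Z k * Q - (\<Sum>i\<in>K. Z i * Y i) + Z k * (\<Sum>i\<in>K. Y i) + (\<Sum>i\<in>K. a i)"
    unfolding Q_def by (simp add: sum_subtractf sum_distrib_left)
  have diag: "Bk_y n mu k x Y Z a b k * Bk_z n mu k Z k
      = mu k / Z k * (- x / 2 - Q) + Z k * (- x / 2 - (Y k + (\<Sum>i\<in>K. Y i))) + (1/2 - 2 * b - (a k + (\<Sum>i\<in>K. a i)))"
    using zk unfolding Bk_y_same[OF k] Bk_z_same[OF k] Q_def K_def yN_def alphaN_def
      sum_remove_index[OF k, of Y] sum_remove_index[OF k, of a] by (simp add: field_simps)
  show ?thesis
    using zk x unfolding vv_def sum_remove_index[OF k] K_def[symmetric] off diag
    by (simp add: field_simps)
qed

lemma has_field_derivative_Bk_y_off: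
  assumes sol: "sys_solution n mu a b S y z" and x: "x \<in> S"
    and k: "k \<in> {1..n-1}" and i: "i \<in> {1..n-1}" "i \<noteq> k" and mu: "mu i - mu k \<noteq> 0"
  shows "((\<lambda>t. Bk_y_off mu k (\<lambda>j. y j t) (\<lambda>j. z j t) a i) has_field_derivative
           2 * z k x * y i x - 2 * z i x * y i x + a i
           - 2 * (z k x + vv n b y z x) * Bk_y_off mu k (\<lambda>j. y j x) (\<lambda>j. z j x) a i) (at x)"
proof -
  obtain e where e: "(mu i - mu k) * e = 1"
    using mu by (metis right_inverse)
  show ?thesis
    unfolding Bk_y_off_def divide_inverse inverse_unique[OF e]
    by (rule sys_solutionD[OF sol x i(1)] sys_solutionD[OF sol x k] derivative_eq_intros refl | use e in algebra)+
qed

lemma has_field_derivative_Bk_y_same: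
  assumes sol: "sys_solution n mu a b S y z" and x: "x \<in> S" "x \<noteq> 0"
    and k: "k \<in> {1..n-1}" and def: "Bk_defined n mu k (\<lambda>j. z j x)"
  shows "((\<lambda>t. Bk_y n mu k t (\<lambda>j. y j t) (\<lambda>j. z j t) a b k) has_field_derivative
           - 2 * (z k x + vv n b y z x) * Bk_y n mu k x (\<lambda>j. y j x) (\<lambda>j. z j x) a b k - (1 - a k)) (at x)"
proof -
  define K where "K = {1..n-1} - {k}"
  define v where "v = vv n b y z x"
  define Q where "Q = (\<Sum>i\<in>K. Bk_y_off mu k (\<lambda>j. y j x) (\<lambda>j. z j x) a i)"
  define SKzy where "SKzy = (\<Sum>i\<in>K. z i x * y i x)"
  define SKy where "SKy = (\<Sum>i\<in>K. y i x)"
  define SKa where "SKa = (\<Sum>i\<in>K. a i)"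
  have "((\<lambda>t. \<Sum>i\<in>K. Bk_y_off mu k (\<lambda>j. y j t) (\<lambda>j. z j t) a i) has_field_derivative
      (\<Sum>i\<in>K. 2 * z k x * y i x - 2 * z i x * y i x + a i
        - 2 * (z k x + v) * Bk_y_off mu k (\<lambda>j. y j x) (\<lambda>j. z j x) a i)) (at x)"
    unfolding v_def K_def
    by (intro DERIV_sum has_field_derivative_Bk_y_off[OF sol x(1) k] Bk_definedD(4)[OF def]) auto
  also have "(\<Sum>i\<in>K. 2 * z k x * y i x - 2 * z i x * y i x + a i
        - 2 * (z k x + v) * Bk_y_off mu k (\<lambda>j. y j x) (\<lambda>j. z j x) a i)
      = 2 * z k x * SKy - 2 * SKzy + SKa - 2 * (z k x + v) * Q"
    unfolding SKy_def SKzy_def SKa_def Q_def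
    by (simp add: sum_subtractf sum.distrib sum_distrib_left mult.assoc)
  finally have dsum: "((\<lambda>t. \<Sum>i\<in>K. Bk_y_off mu k (\<lambda>j. y j t) (\<lambda>j. z j t) a i) has_field_derivative
      2 * z k x * SKy - 2 * SKzy + SKa - 2 * (z k x + v) * Q) (at x)" .
  have vx: "v * x = 2 * ((z k x * y k x + SKzy) + b)"
    unfolding v_def vv_mult_self[OF x(2)] SKzy_def K_def sum_remove_index[OF k, of "\<lambda>j. y j x * z j x"]
    by (simp add: mult.commute)
  have yn: "yN n x (\<lambda>j. y j x) = - x / 2 - (y k x + SKy)"
    unfolding yN_def SKy_def K_def sum_remove_index[OF k, of "\<lambda>j. y j x"] ..
  have al: "alphaN n a b = 1/2 - 2 * b - (a k + SKa)"
    unfolding alphaN_def SKa_def K_def sum_remove_index[OF k, of a] ..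
  obtain iz im ix where inv: "z k x * iz = 1" "mu k * im = 1" "x * ix = 1"
    using Bk_definedD(1,2)[OF def] x(2) by (metis right_inverse)
  have two: "inverse (2::complex) * 2 = 1"
    by simp
  show ?thesis
    unfolding Bk_y_same[OF k] K_def[symmetric] Q_def[symmetric] v_def[symmetric]
      divide_inverse inverse_unique[OF inv(2)]
    by (rule dsum sys_solutionD(2)[OF sol x(1) k, folded v_def]
        has_field_derivative_yN[OF sol x, folded v_def] derivative_eq_intros refl
      | unfold yn al, use inv two vx in algebra)+
qed

lemma has_field_derivative_Bk_z:
  assumes sol: "sys_solution n mu a b S y z" and x: "x \<in> S"
    and k: "k \<in> {1..n-1}" and j: "j \<in> {1..n-1}" and def: "Bk_defined n mu k (\<lambda>i. z i x)"
  shows "((\<lambda>t. Bk_z n mu k (\<lambda>i. z i t) j) has_field_derivative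
           - Bk_z n mu k (\<lambda>i. z i x) j * (Bk_z n mu k (\<lambda>i. z i x) j
             + 2 * (- (mu k / z k x + z k x) - vv n b y z x)) - mu j) (at x)"
proof -
  obtain iz where iz: "z k x * iz = 1"
    using Bk_definedD(1)[OF def] by (metis right_inverse)
  note dz = sys_solutionD(2)[OF sol x]
  show ?thesis
  proof (cases "j = k")
    case True
    show ?thesis
      unfolding True Bk_z_same[OF k] divide_inverse
      by (rule dz[OF k] derivative_eq_intros refl Bk_definedD(1)[OF def]
        | unfold inverse_unique[OF iz], use iz in algebra)+
  next
    case False
    obtain id where id: "(z j x - z k x) * id = 1"
      using Bk_definedD(3)[OF def j False] by (metis right_inverse)
    show ?thesis
      unfolding Bk_z_other[OF j False] divide_inverse
      by (rule dz[OF k] dz[OF j] derivative_eq_intros refl Bk_definedD(1)[OF def] Bk_definedD(3)[OF def j False]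
        | unfold inverse_unique[OF iz] inverse_unique[OF id], use iz id in algebra)+
  qed
qed

lemma has_field_derivative_Bk_y:
  assumes sol: "sys_solution n mu a b S y z" and x: "x \<in> S" "x \<noteq> 0"
    and k: "k \<in> {1..n-1}" and j: "j \<in> {1..n-1}" and def: "Bk_defined n mu k (\<lambda>i. z i x)"
  shows "((\<lambda>t. Bk_y n mu k t (\<lambda>i. y i t) (\<lambda>i. z i t) a b j) has_field_derivative
           2 * Bk_y n mu k x (\<lambda>i. y i x) (\<lambda>i. z i x) a b j
             * (Bk_z n mu k (\<lambda>i. z i x) j + (- (mu k / z k x + z k x) - vv n b y z x)) - (a(k := 1 - a k)) j) (at x)"
proof (cases "j = k")
  case True
  then show ?thesis
    using has_field_derivative_Bk_y_same[OF sol x k def] k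
    by (simp add: Bk_z_same algebra_simps)
next
  case False
  have "2 * w * (m / z - (p - m) / (z' - z) + (- (m / z + z) - u)) - c
      = 2 * z * y - 2 * z' * y + c - 2 * (z + u) * w"
    if w: "w = (z' - z) / (p - m) * ((z' - z) * y - c)" and nz: "z' - z \<noteq> 0" "p - m \<noteq> 0"
    for w m z p z' u y c :: complex
  proof -
    obtain d e where "(z' - z) * d = 1" "(p - m) * e = 1"
      using nz by (metis right_inverse)
    then show ?thesis
      unfolding w divide_inverse inverse_unique[OF \<open>(z' - z) * d = 1\<close>]
        inverse_unique[OF \<open>(p - m) * e = 1\<close>] by algebra
  qed
  note eq = this[OF Bk_y_off_def Bk_definedD(3,4)[OF def j False]]
  show ?thesis
    unfolding Bk_y_other[OF j False] Bk_z_other[OF j False] fun_upd_other[OF False] eq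
    by (rule has_field_derivative_Bk_y_off[OF sol x(1) k j False Bk_definedD(4)[OF def j False]])
qed

lemma sys_solution_trB:
  assumes k: "k \<in> {1..n-1}" and S: "open S" "0 \<notin> S" and sol: "sys_solution n mu a b S y z"
    and T: "\<forall>x\<in>S. trB n mu k x (\<lambda>j. y j x, \<lambda>j. z j x, a, b) = Some (\<lambda>j. y' j x, \<lambda>j. z' j x, a', b')"
  shows "sys_solution n mu a' b' S y' z'"
  unfolding sys_solution_def
proof (intro ballI conjI)
  fix x j
  assume x: "x \<in> S" and j: "j \<in> {1..n-1}"
  have kn: "k \<noteq> n"
    using k by auto
  have H: "Bk_defined n mu k (\<lambda>i. z i t) \<and> (\<forall>i. y' i t = Bk_y n mu k t (\<lambda>i. y i t) (\<lambda>i. z i t) a b i)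
      \<and> (\<forall>i. z' i t = Bk_z n mu k (\<lambda>i. z i t) i) \<and> a' = a(k := 1 - a k) \<and> b' = b + a k - 1/2"
    if "t \<in> S" for t
    using T that kn by (auto simp: trB_eq_Some_iff fun_eq_iff)
  have x0: "x \<noteq> 0"
    using x S by auto
  have def: "Bk_defined n mu k (\<lambda>i. z i x)"
    using H[OF x] by blast
  let ?v = "vv n b y z x"
  have v: "vv n b' y' z' x = - (mu k / z k x + z k x) - ?v"
    using vv_Bk[OF k def x0, where Y = "\<lambda>i. y i x"] H[OF x] unfolding vv_def by simp
  show "(z' j has_field_derivative (- z' j x * (z' j x + 2 * vv n b' y' z' x) - mu j)) (at x)"
  proof (rule has_field_derivative_transform_open_eq[OF has_field_derivative_Bk_z[OF sol x k j def] S(1) x])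
    show "z' j t = Bk_z n mu k (\<lambda>i. z i t) j" if "t \<in> S" for t
      using H[OF that] by simp
    show "- Bk_z n mu k (\<lambda>i. z i x) j * (Bk_z n mu k (\<lambda>i. z i x) j + 2 * (- (mu k / z k x + z k x) - ?v)) - mu j
        = - z' j x * (z' j x + 2 * vv n b' y' z' x) - mu j"
      unfolding v using H[OF x] by simp
  qed
  show "(y' j has_field_derivative (2 * y' j x * (z' j x + vv n b' y' z' x) - a' j)) (at x)"
  proof (rule has_field_derivative_transform_open_eq[OF has_field_derivative_Bk_y[OF sol x x0 k j def] S(1) x])
    show "y' j t = Bk_y n mu k t (\<lambda>i. y i t) (\<lambda>i. z i t) a b j" if "t \<in> S" for t
      using H[OF that] by simp
    show "2 * Bk_y n mu k x (\<lambda>i. y i x) (\<lambda>i. z i x) a b j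
          * (Bk_z n mu k (\<lambda>i. z i x) j + (- (mu k / z k x + z k x) - ?v)) - (a(k := 1 - a k)) j
        = 2 * y' j x * (z' j x + vv n b' y' z' x) - a' j"
      unfolding v using H[OF x] by simp
  qed
qed

lemma index_below_n: "k \<in> {1..n} \<Longrightarrow> k \<noteq> n \<Longrightarrow> k \<in> {1..n-1}"
  for k n :: nat
  by auto

lemma bt_map_eq: "bt_map c n mu k x = (if c then trB n mu k x else trA n mu k x)"
  by (simp add: bt_map_def fun_eq_iff)

lemma partial_commute_trA_trA_any:
  assumes k: "k \<in> {1..n}" and j: "j \<in> {1..n}" and jk: "j \<noteq> k"
  shows "partial_commute (trA n mu k x) (trA n mu j x)"
proof (cases "k = n")
  case True
  then show ?thesis
    using partial_commute_sym[OF partial_commute_trA_trA_n[OF index_below_n[OF j]]] jk by simp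
next
  case False
  then show ?thesis
    using partial_commute_trA_trA_n[OF index_below_n[OF k False]] partial_commute_trA_trA[OF False _ jk]
    by (cases "j = n") simp_all
qed

lemma partial_commute_trA_trB_any:
  assumes k: "k \<in> {1..n}" and j: "j \<in> {1..n}" and jk: "j \<noteq> k"
  shows "partial_commute (trA n mu k x) (trB n mu j x)"
proof (cases "k = n")
  case True
  then show ?thesis
    using partial_commute_trA_n_trB[OF index_below_n[OF j]] jk by simp
next
  case False
  show ?thesis
  proof (cases "j = n")
    case True
    then show ?thesis
      using partial_commute_trA_trB_n[OF index_below_n[OF k False]] by simp
  next
    case False
    show ?thesis
      using partial_commute_trA_trB[OF index_below_n[OF k \<open>k \<noteq> n\<close>] index_below_n[OF j False] jk] .
  qed
qed

lemma partial_commute_trB_trB_any: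
  assumes k: "k \<in> {1..n}" and j: "j \<in> {1..n}" and jk: "j \<noteq> k"
  shows "partial_commute (trB n mu k x) (trB n mu j x)"
proof (cases "k = n")
  case True
  then show ?thesis
    using partial_commute_sym[OF partial_commute_trB_trB_n[OF index_below_n[OF j]]] jk by simp
next
  case False
  show ?thesis
  proof (cases "j = n")
    case True
    then show ?thesis
      using partial_commute_trB_trB_n[OF index_below_n[OF k False]] by simp
  next
    case False
    show ?thesis
      using partial_commute_trB_trB[OF index_below_n[OF k \<open>k \<noteq> n\<close>] index_below_n[OF j False] jk] .
  qed
qed

lemma partial_involution_bt_map:
  assumes "k \<in> {1..n}"
  shows "partial_involution (bt_map c n mu k x)"
proof (cases "k = n")
  case True
  then show ?thesis
    using partial_involution_trA_n partial_involution_trB_n by (simp add: bt_map_eq)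
next
  case False
  then show ?thesis
    using partial_involution_trA[OF False] partial_involution_trB[OF index_below_n[OF assms False]]
    by (simp add: bt_map_eq)
qed

lemma partial_commute_bt_map:
  assumes "k \<in> {1..n}" "j \<in> {1..n}" "j \<noteq> k"
  shows "partial_commute (bt_map c n mu k x) (bt_map d n mu j x)"
  using partial_commute_trA_trA_any[OF assms] partial_commute_trA_trB_any[OF assms]
    partial_commute_sym[OF partial_commute_trA_trB_any[OF assms(2,1) assms(3)[symmetric]]]
    partial_commute_trB_trB_any[OF assms]
  by (cases c; cases d) (simp_all add: bt_map_eq)

lemma sys_solution_bt_map:
  assumes k: "k \<in> {1..n}" and S: "open S" "0 \<notin> S" and sol: "sys_solution n mu a b S y z"
    and T: "\<forall>x\<in>S. bt_map c n mu k x (\<lambda>j. y j x, \<lambda>j. z j x, a, b) = Some (\<lambda>j. y' j x, \<lambda>j. z' j x, a', b')"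
  shows "sys_solution n mu a' b' S y' z'"
proof (cases "k = n")
  case True
  then show ?thesis
    using sys_solution_trA_n[OF S sol] sys_solution_trB_n[OF S sol] T by (cases c) (simp_all add: bt_map_eq)
next
  case False
  note k' = index_below_n[OF k False]
  show ?thesis
    using sys_solution_trA[OF k' S sol] sys_solution_trB[OF k' S sol] T by (cases c) (simp_all add: bt_map_eq)
qed

theorem proposition6:
  fixes n :: nat and mu :: "nat \<Rightarrow> complex"
  assumes "n \<ge> 2"
    and "\<forall>j\<in>{1..n-1}. mu j \<noteq> 0"
    and "\<forall>i\<in>{1..n-1}. \<forall>j\<in>{1..n-1}. i \<noteq> j \<longrightarrow> mu i \<noteq> mu j"
  shows
    "(\<forall>c k S y z a b y' z' a' b'. k \<in> {1..n} \<longrightarrow> open S \<longrightarrow> 0 \<notin> S \<longrightarrow>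
        sys_solution n mu a b S y z \<longrightarrow>
        (\<forall>x\<in>S. bt_map c n mu k x (\<lambda>j. y j x, \<lambda>j. z j x, a, b)
                  = Some (\<lambda>j. y' j x, \<lambda>j. z' j x, a', b')) \<longrightarrow>
        sys_solution n mu a' b' S y' z')
   \<and> (\<forall>c k x s s1 s2. k \<in> {1..n} \<longrightarrow>
        bt_map c n mu k x s = Some s1 \<longrightarrow> bt_map c n mu k x s1 = Some s2 \<longrightarrow> s2 = s)
   \<and> (\<forall>c d j k x s s1 s2. j \<in> {1..n} \<longrightarrow> k \<in> {1..n} \<longrightarrow> j \<noteq> k \<longrightarrow>
        Option.bind (bt_map c n mu k x s) (bt_map d n mu j x) = Some s1 \<longrightarrow>
        Option.bind (bt_map d n mu j x s) (bt_map c n mu k x) = Some s2 \<longrightarrow> s1 = s2)"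
proof (intro conjI allI impI)
  fix c k S y z a b y' z' a' b'
  assume "k \<in> {1..n}" "open S" "0 \<notin> S" "sys_solution n mu a b S y z"
    "\<forall>x\<in>S. bt_map c n mu k x (\<lambda>j. y j x, \<lambda>j. z j x, a, b) = Some (\<lambda>j. y' j x, \<lambda>j. z' j x, a', b')"
  then show "sys_solution n mu a' b' S y' z'"
    by (rule sys_solution_bt_map)
next
  fix c k x s s1 s2
  assume "k \<in> {1..n}" "bt_map c n mu k x s = Some s1" "bt_map c n mu k x s1 = Some s2"
  then show "s2 = s"
    using partial_involution_bt_map unfolding partial_involution_def by blast
next
  fix c d j k x s s1 s2
  assume "j \<in> {1..n}" "k \<in> {1..n}" "j \<noteq> k"
    "Option.bind (bt_map c n mu k x s) (bt_map d n mu j x) = Some s1"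
    "Option.bind (bt_map d n mu j x s) (bt_map c n mu k x) = Some s2"
  then show "s1 = s2"
    using partial_commute_bt_map unfolding partial_commute_def by blast
qed

end
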